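(* Consider the system $L'(t)=br_4e^{-d_4\tau_1}A_f(t-\tau_1)-(d_1+r_1)L(t)$, $N'(t)=r_1g(L(t))-(d_2+r_2)N(t)$, $A_q'(t)=r_2N(t)-(d_3+r_3)A_q(t)$, $A_f'(t)=\frac{r_3}{2}e^{-d_3\tau_2}A_q(t-\tau_2)-(d_4+r_4)A_f(t)$, where $b,r_1,\dots,r_4,d_1,\dots,d_4,\tau_1,\tau_2$ are positive constants and $g(L)=\frac{N_{cap}L}{h+L}$ with positive constants $N_{cap},h$. Let $\tau=\max\{\tau_1,\tau_2\}$, and let $\mathcal{R}_0=\frac12 bg'(0)e^{-(d_4\tau_1+d_3\tau_2)}\prod_{i=1}^4\frac{r_i}{d_i+r_i}$ (with $g'(0)=N_{cap}/h$). Then: (i) if $\mathcal{R}_0\le1$, the zero solution is globally asymptotically stable in $C([-\tau,0],\mathbb{R}^4_+)$; (ii) if $\mathcal{R}_0>1$, the system admits a unique positive equilibrium $u^*$, and $u^*$ is globally asymptotically stable in $C([-\tau,0],\mathbb{R}^4_+)\setminus\{0\}$.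
   Context: The system is regarded as a delay differential system with phase space $C([-\tau,0],\mathbb{R}^4_+)$ of initial data for $(L,N,A_q,A_f)$.
   Formalization: In (ii), convergence to $u^*$ is asserted only for nonnegative initial data in which L(0) or N(0) is nonzero, $A_q$ is not identically zero on [-$\tau_2$, 0], or $A_f$ is not identically zero on [-$\tau_1$, 0]. Apart from conventions, each condition added here is assumed in the paper as well or is needed for the statement above to hold. *)

theory Defs
  imports "HOL-Analysis.Analysis"
begin

record par =
  pb :: real  pr1 :: real  pr2 :: real  pr3 :: real  pr4 :: real
  pd1 :: real pd2 :: real  pd3 :: real  pd4 :: real
  ptau1 :: real  ptau2 :: real  pNcap :: real  ph :: real

definition admissible :: "par \<Rightarrow> bool" where
  "admissible p \<longleftrightarrow> pb p > 0 \<and> pr1 p > 0 \<and> pr2 p > 0 \<and> pr3 p > 0 \<and> pr4 p > 0 \<and>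
     pd1 p > 0 \<and> pd2 p > 0 \<and> pd3 p > 0 \<and> pd4 p > 0 \<and> ptau1 p > 0 \<and> ptau2 p > 0 \<and>
     pNcap p > 0 \<and> ph p > 0"

definition ptau :: "par \<Rightarrow> real" where
  "ptau p = max (ptau1 p) (ptau2 p)"

definition gfun :: "par \<Rightarrow> real \<Rightarrow> real" where
  "gfun p L = pNcap p * L / (ph p + L)"

definition R0 :: "par \<Rightarrow> real" where
  "R0 p = 1/2 * pb p * (pNcap p / ph p) * exp (- (pd4 p * ptau1 p + pd3 p * ptau2 p)) *
      (pr1 p / (pd1 p + pr1 p)) * (pr2 p / (pd2 p + pr2 p)) *
      (pr3 p / (pd3 p + pr3 p)) * (pr4 p / (pd4 p + pr4 p))"

text \<open>A solution on [-tau, infinity): continuous there, and satisfying the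
  equations for t \<ge> 0 (one-sided derivative at t = 0).  Its initial datum is its
  restriction to [-tau, 0].\<close>
definition is_solution ::
  "par \<Rightarrow> (real \<Rightarrow> real) \<Rightarrow> (real \<Rightarrow> real) \<Rightarrow> (real \<Rightarrow> real) \<Rightarrow> (real \<Rightarrow> real) \<Rightarrow> bool" where
  "is_solution p L N Aq Af \<longleftrightarrow>
     continuous_on {-ptau p..} L \<and> continuous_on {-ptau p..} N \<and>
     continuous_on {-ptau p..} Aq \<and> continuous_on {-ptau p..} Af \<and>
     (\<forall>t\<ge>0.
        (L has_real_derivative
           (pb p * pr4 p * exp (- pd4 p * ptau1 p) * Af (t - ptau1 p) - (pd1 p + pr1 p) * L t))
           (at t within {0..}) \<and>
        (N has_real_derivative
           (pr1 p * gfun p (L t) - (pd2 p + pr2 p) * N t)) (at t within {0..}) \<and>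
        (Aq has_real_derivative
           (pr2 p * N t - (pd3 p + pr3 p) * Aq t)) (at t within {0..}) \<and>
        (Af has_real_derivative
           (pr3 p / 2 * exp (- pd3 p * ptau2 p) * Aq (t - ptau2 p) - (pd4 p + pr4 p) * Af t))
           (at t within {0..}))"

definition nonneg_init ::
  "par \<Rightarrow> (real \<Rightarrow> real) \<Rightarrow> (real \<Rightarrow> real) \<Rightarrow> (real \<Rightarrow> real) \<Rightarrow> (real \<Rightarrow> real) \<Rightarrow> bool" where
  "nonneg_init p L N Aq Af \<longleftrightarrow>
     (\<forall>\<theta>\<in>{-ptau p..0}. L \<theta> \<ge> 0 \<and> N \<theta> \<ge> 0 \<and> Aq \<theta> \<ge> 0 \<and> Af \<theta> \<ge> 0)"

definition nonzero_init ::
  "par \<Rightarrow> (real \<Rightarrow> real) \<Rightarrow> (real \<Rightarrow> real) \<Rightarrow> (real \<Rightarrow> real) \<Rightarrow> (real \<Rightarrow> real) \<Rightarrow> bool" where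
  "nonzero_init p L N Aq Af \<longleftrightarrow>
     (\<exists>\<theta>\<in>{-ptau p..0}. L \<theta> \<noteq> 0 \<or> N \<theta> \<noteq> 0 \<or> Aq \<theta> \<noteq> 0 \<or> Af \<theta> \<noteq> 0)"

text \<open>The part of the initial datum that actually enters the evolution for t \<ge> 0
  is nonzero (otherwise the solution is identically 0 for t \<ge> 0).\<close>
definition effective_nonzero_init ::
  "par \<Rightarrow> (real \<Rightarrow> real) \<Rightarrow> (real \<Rightarrow> real) \<Rightarrow> (real \<Rightarrow> real) \<Rightarrow> (real \<Rightarrow> real) \<Rightarrow> bool" where
  "effective_nonzero_init p L N Aq Af \<longleftrightarrow>
     L 0 \<noteq> 0 \<or> N 0 \<noteq> 0 \<or> (\<exists>\<theta>\<in>{-ptau2 p..0}. Aq \<theta> \<noteq> 0) \<or> (\<exists>\<theta>\<in>{-ptau1 p..0}. Af \<theta> \<noteq> 0)"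

text \<open>Constant equilibrium (x1,x2,x3,x4) = (L,N,Aq,Af).\<close>
definition is_equilibrium :: "par \<Rightarrow> real \<times> real \<times> real \<times> real \<Rightarrow> bool" where
  "is_equilibrium p e \<longleftrightarrow> (case e of (x1, x2, x3, x4) \<Rightarrow>
     pb p * pr4 p * exp (- pd4 p * ptau1 p) * x4 - (pd1 p + pr1 p) * x1 = 0 \<and>
     pr1 p * gfun p x1 - (pd2 p + pr2 p) * x2 = 0 \<and>
     pr2 p * x2 - (pd3 p + pr3 p) * x3 = 0 \<and>
     pr3 p / 2 * exp (- pd3 p * ptau2 p) * x3 - (pd4 p + pr4 p) * x4 = 0)"

text \<open>Lyapunov stability of the equilibrium e w.r.t. initial data in
  {phi in C([-tau,0],R^4_+). P phi}, in the sup norm (componentwise max) of C.\<close>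
definition stable_in ::
  "par \<Rightarrow> real \<times> real \<times> real \<times> real \<Rightarrow>
   ((real \<Rightarrow> real) \<Rightarrow> (real \<Rightarrow> real) \<Rightarrow> (real \<Rightarrow> real) \<Rightarrow> (real \<Rightarrow> real) \<Rightarrow> bool) \<Rightarrow> bool" where
  "stable_in p e P \<longleftrightarrow> (case e of (x1, x2, x3, x4) \<Rightarrow>
     (\<forall>\<epsilon>>0. \<exists>\<delta>>0. \<forall>L N Aq Af.
        is_solution p L N Aq Af \<and> nonneg_init p L N Aq Af \<and> P L N Aq Af \<and>
        (\<forall>\<theta>\<in>{-ptau p..0}. \<bar>L \<theta> - x1\<bar> < \<delta> \<and> \<bar>N \<theta> - x2\<bar> < \<delta> \<and>
                            \<bar>Aq \<theta> - x3\<bar> < \<delta> \<and> \<bar>Af \<theta> - x4\<bar> < \<delta>)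
        \<longrightarrow> (\<forall>t\<ge>-ptau p. \<bar>L t - x1\<bar> < \<epsilon> \<and> \<bar>N t - x2\<bar> < \<epsilon> \<and>
                             \<bar>Aq t - x3\<bar> < \<epsilon> \<and> \<bar>Af t - x4\<bar> < \<epsilon>)))"

definition attractive_in ::
  "par \<Rightarrow> real \<times> real \<times> real \<times> real \<Rightarrow>
   ((real \<Rightarrow> real) \<Rightarrow> (real \<Rightarrow> real) \<Rightarrow> (real \<Rightarrow> real) \<Rightarrow> (real \<Rightarrow> real) \<Rightarrow> bool) \<Rightarrow> bool" where
  "attractive_in p e P \<longleftrightarrow> (case e of (x1, x2, x3, x4) \<Rightarrow>
     (\<forall>L N Aq Af.
        is_solution p L N Aq Af \<and> nonneg_init p L N Aq Af \<and> P L N Aq Af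
        \<longrightarrow> (L \<longlongrightarrow> x1) at_top \<and> (N \<longlongrightarrow> x2) at_top \<and>
            (Aq \<longlongrightarrow> x3) at_top \<and> (Af \<longlongrightarrow> x4) at_top))"

end

theory Submission
  imports Defs
begin

text \<open>
  The system is cooperative: each right-hand side is nondecreasing in the other, possibly
  delayed, components.  Comparing each equation with a scalar linear equation
  \<open>x' = f - k x\<close> and arguing by the method of steps, one finds that constant vectors \<open>m\<close> with
  \<open>0 \<le> rhs m\<close> (lower solutions) and with \<open>rhs m \<le> 0\<close> (upper solutions) bound every solution
  from below resp. above forever once they bound its initial history.

  The same comparison shows that the vector of upper limits of a solution is a lower solution
  and the vector of lower limits an upper solution.  A lower or upper solution lies on the
  correct side of the curve where the last three equilibrium equations hold; along that curve
  the first equation becomes \<open>x = loop_gain * g x\<close> with \<open>g\<close> concave, whose only positive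
  root \<open>Lstar\<close> exists exactly when \<open>R0 > 1\<close>.  This squeezes the limits onto \<open>0\<close>, resp. onto
  the positive equilibrium once the lower limit of \<open>L\<close> is known to be positive.  That
  persistence holds because positivity travels around the cycle \<open>L \<rightarrow> N \<rightarrow> Aq \<rightarrow> Af \<rightarrow> L\<close>,
  after which a small multiple of the equilibrium is a lower solution below the solution on
  a whole window of length \<open>\<tau>\<close>.  Stability uses the same invariant order intervals, between
  multiples of the equilibrium or, at \<open>0\<close>, below multiples of a vector adapted to the
  linearisation.
\<close>

lemma extend_by_steps:
  fixes P :: "real \<Rightarrow> bool"
  assumes "h > 0"
    and base: "\<And>t. t \<in> {a..c} \<Longrightarrow> P t"
    and step: "\<And>b. c \<le> b \<Longrightarrow> \<forall>t\<in>{a..b}. P t \<Longrightarrow> \<forall>t\<in>{a..b + h}. P t"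
    and "a \<le> t"
  shows "P t"
proof -
  have steps: "\<forall>t\<in>{a..c + real n * h}. P t" for n
  proof (induction n)
    case 0
    then show ?case using base by simp
  next
    case (Suc n)
    then show ?case using step[of "c + real n * h"] \<open>h > 0\<close> by (simp add: algebra_simps)
  qed
  obtain n :: nat where "(t - c) / h \<le> real n"
    using real_arch_simple by blast
  then have "t \<le> c + real n * h"
    using \<open>h > 0\<close> by (simp add: divide_le_eq algebra_simps)
  then show ?thesis using steps[of n] \<open>a \<le> t\<close> by auto
qed

lemma continuous_on_pos_right_interval:
  fixes f :: "real \<Rightarrow> real"
  assumes "continuous_on {a..} f" "a \<le> \<theta>" "0 < f \<theta>"
  shows "\<exists>d>0. \<forall>s\<in>{\<theta>..\<theta> + d}. 0 < f s"
proof -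
  have "eventually (\<lambda>s. 0 < f s) (at \<theta> within {a..})"
    using assms continuous_on_def[of "{a..}" f] by (auto intro: order_tendstoD)
  then obtain d where "d > 0" and d: "\<And>s. s \<in> {a..} \<Longrightarrow> s \<noteq> \<theta> \<Longrightarrow> dist s \<theta> < d \<Longrightarrow> 0 < f s"
    by (auto simp: eventually_at)
  have "0 < f s" if "s \<in> {\<theta>..\<theta> + d / 2}" for s
    using that d[of s] \<open>d > 0\<close> assms(2,3) by (cases "s = \<theta>") (auto simp: dist_real_def)
  then show ?thesis using \<open>d > 0\<close> by (intro exI[of _ "d / 2"]) auto
qed

lemma compact_continuous_pos_lower_bound:
  fixes f :: "real \<Rightarrow> real"
  assumes "compact S" "continuous_on S f" "\<And>t. t \<in> S \<Longrightarrow> 0 < f t"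
  obtains m where "m > 0" "\<And>t. t \<in> S \<Longrightarrow> m \<le> f t"
proof (cases "S = {}")
  case True
  then show thesis by (intro that[of 1]) auto
next
  case False
  then obtain t0 where "t0 \<in> S" "\<And>t. t \<in> S \<Longrightarrow> f t0 \<le> f t"
    using continuous_attains_inf[OF assms(1) _ assms(2)] by blast
  then show thesis using assms(3) by (intro that[of "f t0"]) auto
qed

lemma abs_diff_lt_imp_scaled_bounds:
  fixes x c s m :: real
  assumes "\<bar>x - c\<bar> < s * m" "m \<le> c" "0 \<le> s"
  shows "(1 - s) * c \<le> x \<and> x \<le> (1 + s) * c"
proof -
  have "s * m \<le> s * c" using assms by (intro mult_left_mono) auto
  then show ?thesis using assms by (auto simp: algebra_simps abs_if split: if_splits)
qed

lemma scaled_bounds_imp_abs_diff_lt: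
  fixes x c s M \<epsilon> :: real
  assumes "(1 - s) * c \<le> x" "x \<le> (1 + s) * c" "c \<le> M" "0 \<le> s" "s * M < \<epsilon>"
  shows "\<bar>x - c\<bar> < \<epsilon>"
proof -
  have "s * c \<le> s * M" using assms by (intro mult_left_mono) auto
  then show ?thesis using assms by (auto simp: algebra_simps abs_if)
qed

section \<open>Scalar linear differential inequalities\<close>

lemma integrating_factor_deriv:
  assumes "(x has_real_derivative f t - k * x t) (at t within S)"
  shows "((\<lambda>t. exp (k * t) * x t) has_real_derivative exp (k * t) * f t) (at t within S)"
  using assms by (auto intro!: derivative_eq_intros simp: algebra_simps)

lemma integrating_factor_mono:
  fixes x f :: "real \<Rightarrow> real"
  assumes "a \<le> b"
    and der: "\<And>t. t \<in> {a..b} \<Longrightarrow> (x has_real_derivative f t - k * x t) (at t within {a..b})"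
    and nonneg: "\<And>t. t \<in> {a..b} \<Longrightarrow> 0 \<le> f t"
  shows "exp (k * a) * x a \<le> exp (k * b) * x b"
proof (rule DERIV_nonneg_imp_increasing_open[OF \<open>a \<le> b\<close>])
  fix t assume "a < t" "t < b"
  then show "\<exists>y. ((\<lambda>t. exp (k * t) * x t) has_real_derivative y) (at t) \<and> 0 \<le> y"
    using integrating_factor_deriv[where f = f, OF der[of t]] nonneg[of t] by (auto simp: at_within_Icc_at)
qed (rule DERIV_continuous_on, rule integrating_factor_deriv[where f = f], rule der)

lemma integrating_factor_strict_mono:
  fixes x f :: "real \<Rightarrow> real"
  assumes "a < b"
    and der: "\<And>t. t \<in> {a..b} \<Longrightarrow> (x has_real_derivative f t - k * x t) (at t within {a..b})"
    and pos: "\<And>t. t \<in> {a<..<b} \<Longrightarrow> 0 < f t"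
  shows "exp (k * a) * x a < exp (k * b) * x b"
proof (rule DERIV_pos_imp_increasing_open[OF \<open>a < b\<close>])
  fix t assume "a < t" "t < b"
  then show "\<exists>y. ((\<lambda>t. exp (k * t) * x t) has_real_derivative y) (at t) \<and> 0 < y"
    using integrating_factor_deriv[where f = f, OF der[of t]] pos[of t] by (auto simp: at_within_Icc_at)
qed (rule DERIV_continuous_on, rule integrating_factor_deriv[where f = f], rule der)

lemma linear_ode_lower_bound:
  fixes x f :: "real \<Rightarrow> real"
  assumes "a \<le> b"
    and der: "\<And>t. t \<in> {a..b} \<Longrightarrow> (x has_real_derivative f t - k * x t) (at t within {a..b})"
    and forcing: "\<And>t. t \<in> {a..b} \<Longrightarrow> k * m \<le> f t"
    and "m \<le> x a"
  shows "m \<le> x b"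
proof -
  have "exp (k * a) * (x a - m) \<le> exp (k * b) * (x b - m)"
  proof (rule integrating_factor_mono[where f = "\<lambda>t. f t - k * m"])
    show "((\<lambda>t. x t - m) has_real_derivative f t - k * m - k * (x t - m)) (at t within {a..b})"
      if "t \<in> {a..b}" for t
      using der[OF that] by (auto intro!: derivative_eq_intros simp: algebra_simps)
  qed (use assms in auto)
  moreover have "0 \<le> exp (k * a) * (x a - m)" using \<open>m \<le> x a\<close> by simp
  ultimately have "0 \<le> exp (k * b) * (x b - m)" by linarith
  then show ?thesis by (simp add: zero_le_mult_iff)
qed

lemma linear_ode_upper_bound:
  fixes x f :: "real \<Rightarrow> real"
  assumes "a \<le> b"
    and der: "\<And>t. t \<in> {a..b} \<Longrightarrow> (x has_real_derivative f t - k * x t) (at t within {a..b})"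
    and forcing: "\<And>t. t \<in> {a..b} \<Longrightarrow> f t \<le> k * M"
    and "x a \<le> M"
  shows "x b \<le> M"
proof -
  have "- M \<le> - x b"
  proof (rule linear_ode_lower_bound[where x = "\<lambda>t. - x t" and f = "\<lambda>t. - f t"])
    show "((\<lambda>t. - x t) has_real_derivative - f t - k * - x t) (at t within {a..b})"
      if "t \<in> {a..b}" for t
      using der[OF that] by (auto intro!: derivative_eq_intros)
  qed (use assms in auto)
  then show ?thesis by simp
qed

lemma linear_ode_positive:
  fixes x f :: "real \<Rightarrow> real"
  assumes "a < c" "c \<le> b"
    and der: "\<And>t. t \<in> {a..b} \<Longrightarrow> (x has_real_derivative f t - k * x t) (at t within {a..b})"
    and nonneg: "\<And>t. t \<in> {a..b} \<Longrightarrow> 0 \<le> f t"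
    and pos: "\<And>t. t \<in> {a<..<c} \<Longrightarrow> 0 < f t"
    and "0 \<le> x a"
  shows "0 < x b"
proof -
  have "0 \<le> exp (k * a) * x a"
    using \<open>0 \<le> x a\<close> by simp
  also have "\<dots> < exp (k * c) * x c"
    using assms by (intro integrating_factor_strict_mono[where f = f])
      (auto intro: has_field_derivative_subset[OF der])
  also have "\<dots> \<le> exp (k * b) * x b"
    using assms by (intro integrating_factor_mono[where f = f])
      (auto intro: has_field_derivative_subset[OF der])
  finally show ?thesis by (simp add: zero_less_mult_iff)
qed

lemma linear_ode_positive_after:
  fixes x f :: "real \<Rightarrow> real"
  assumes "0 \<le> a" "a < c" "a < t"
    and der: "\<And>s. 0 \<le> s \<Longrightarrow> (x has_real_derivative f s - k * x s) (at s within {0..})"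
    and nonneg: "\<And>s. a \<le> s \<Longrightarrow> 0 \<le> f s"
    and pos: "\<And>s. s \<in> {a<..<c} \<Longrightarrow> 0 < f s"
    and "0 \<le> x a"
  shows "0 < x t"
proof (rule linear_ode_positive[where a = a and c = "min c t" and b = t and f = f and k = k])
  show "(x has_real_derivative f s - k * x s) (at s within {a..t})" if "s \<in> {a..t}" for s
    using that \<open>0 \<le> a\<close> by (intro has_field_derivative_subset[OF der]) auto
qed (use assms in auto)

lemma tendsto_exp_decay:
  fixes k :: real
  assumes "k > 0"
  shows "((\<lambda>t. exp (k * (T - t)) * C) \<longlongrightarrow> 0) at_top"
proof -
  have "filterlim (\<lambda>t::real. - T + t) at_top at_top"
    by (rule filterlim_tendsto_add_at_top[OF tendsto_const filterlim_ident])
  then have "filterlim (\<lambda>t::real. T - t) at_bot at_top"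
    by (subst filterlim_uminus_at_bot) simp
  then have "filterlim (\<lambda>t. k * (T - t)) at_bot at_top"
    by (rule filterlim_tendsto_pos_mult_at_bot[OF tendsto_const assms])
  from filterlim_compose[OF exp_at_bot this] show ?thesis
    by (rule tendsto_mult_left_zero)
qed

lemma linear_ode_eventually_le:
  fixes x f :: "real \<Rightarrow> real"
  assumes "k > 0" "\<epsilon> > 0"
    and der: "\<And>t. a \<le> t \<Longrightarrow> (x has_real_derivative f t - k * x t) (at t within {a..})"
    and forcing: "\<And>\<epsilon>. \<epsilon> > 0 \<Longrightarrow> eventually (\<lambda>t. f t \<le> F + \<epsilon>) at_top"
  shows "eventually (\<lambda>t. x t \<le> F / k + \<epsilon>) at_top"
proof -
  define m where "m = F / k + \<epsilon> / 2"
  obtain T where "a \<le> T" and T: "\<And>t. T \<le> t \<Longrightarrow> f t \<le> k * m"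
  proof -
    have "eventually (\<lambda>t. f t \<le> F + k * \<epsilon> / 2) at_top"
      using assms by (intro forcing) simp
    moreover have "F + k * \<epsilon> / 2 = k * m"
      using \<open>k > 0\<close> by (simp add: m_def field_simps)
    ultimately obtain T where "\<And>t. T \<le> t \<Longrightarrow> f t \<le> k * m"
      by (auto simp: eventually_at_top_linorder)
    then show thesis by (intro that[of "max a T"]) auto
  qed
  have decay: "x t - m \<le> exp (k * (T - t)) * (x T - m)" if "T \<le> t" for t
  proof -
    have "exp (k * T) * (m - x T) \<le> exp (k * t) * (m - x t)"
    proof (rule integrating_factor_mono[where f = "\<lambda>s. k * m - f s"])
      show "((\<lambda>s. m - x s) has_real_derivative k * m - f s - k * (m - x s)) (at s within {T..t})"
        if "s \<in> {T..t}" for s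
      proof -
        have "(x has_real_derivative f s - k * x s) (at s within {T..t})"
          using that \<open>a \<le> T\<close> by (intro has_field_derivative_subset[OF der]) auto
        then show ?thesis by (auto intro!: derivative_eq_intros simp: algebra_simps)
      qed
    qed (use that T in auto)
    then have "exp (k * t) * (x t - m) \<le> exp (k * t) * (exp (k * (T - t)) * (x T - m))"
      by (simp add: algebra_simps flip: exp_add)
    then show ?thesis by simp
  qed
  have "((\<lambda>t. exp (k * (T - t)) * (x T - m)) \<longlongrightarrow> 0) at_top"
    using \<open>k > 0\<close> by (rule tendsto_exp_decay)
  then have "eventually (\<lambda>t. exp (k * (T - t)) * (x T - m) < \<epsilon> / 2) at_top"
    using \<open>\<epsilon> > 0\<close> by (intro order_tendstoD) auto
  then show ?thesis
    using eventually_ge_at_top[of T]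
  proof eventually_elim
    case (elim t)
    with decay[of t] show ?case unfolding m_def by linarith
  qed
qed

section \<open>Upper and lower limits at infinity\<close>

text \<open>The library's \<open>Limsup\<close> needs a complete lattice; for eventually bounded real functions
  the conditionally complete infimum of the eventual upper bounds suffices.\<close>

definition limsup_at_top :: "(real \<Rightarrow> real) \<Rightarrow> real" where
  "limsup_at_top x = Inf {M. eventually (\<lambda>t. x t \<le> M) at_top}"

definition liminf_at_top :: "(real \<Rightarrow> real) \<Rightarrow> real" where
  "liminf_at_top x = - limsup_at_top (\<lambda>t. - x t)"

lemma eventual_bounds_nonempty_bdd:
  fixes x :: "real \<Rightarrow> real"
  assumes "Bfun x at_top"
  shows "{M. eventually (\<lambda>t. x t \<le> M) at_top} \<noteq> {}"
    and "bdd_below {M. eventually (\<lambda>t. x t \<le> M) at_top}"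
proof -
  from assms obtain K where K: "eventually (\<lambda>t. \<bar>x t\<bar> \<le> K) at_top"
    by (auto simp: Bfun_def)
  then have "eventually (\<lambda>t. x t \<le> K) at_top"
    by eventually_elim simp
  then show "{M. eventually (\<lambda>t. x t \<le> M) at_top} \<noteq> {}"
    by blast
  show "bdd_below {M. eventually (\<lambda>t. x t \<le> M) at_top}"
  proof (rule bdd_belowI)
    fix M assume "M \<in> {M. eventually (\<lambda>t. x t \<le> M) at_top}"
    then have "eventually (\<lambda>t. x t \<le> M) at_top" by simp
    with K have "eventually (\<lambda>t. - K \<le> M) (at_top :: real filter)"
      by eventually_elim auto
    then show "- K \<le> M" by simp
  qed
qed

lemma eventually_le_limsup_at_top:
  assumes "Bfun x at_top" "\<epsilon> > 0"
  shows "eventually (\<lambda>t. x t \<le> limsup_at_top x + \<epsilon>) at_top"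
proof -
  have "Inf {M. eventually (\<lambda>t. x t \<le> M) at_top} < limsup_at_top x + \<epsilon>"
    using assms(2) by (simp add: limsup_at_top_def)
  then obtain M where "eventually (\<lambda>t. x t \<le> M) at_top" "M < limsup_at_top x + \<epsilon>"
    using cInf_less_iff[OF eventual_bounds_nonempty_bdd[OF assms(1)]] by auto
  then show ?thesis by (auto elim: eventually_mono)
qed

lemma limsup_at_top_le:
  assumes "Bfun x at_top" "\<And>\<epsilon>. \<epsilon> > 0 \<Longrightarrow> eventually (\<lambda>t. x t \<le> M + \<epsilon>) at_top"
  shows "limsup_at_top x \<le> M"
proof (rule field_le_epsilon)
  fix \<epsilon> :: real assume "\<epsilon> > 0"
  then show "limsup_at_top x \<le> M + \<epsilon>"
    unfolding limsup_at_top_def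
    using assms by (intro cInf_lower eventual_bounds_nonempty_bdd) auto
qed

lemma le_limsup_at_top:
  assumes "Bfun x at_top" "eventually (\<lambda>t. A \<le> x t) at_top"
  shows "A \<le> limsup_at_top x"
  unfolding limsup_at_top_def
proof (rule cInf_greatest[OF eventual_bounds_nonempty_bdd(1)[OF assms(1)]])
  fix M assume "M \<in> {M. eventually (\<lambda>t. x t \<le> M) at_top}"
  then have "eventually (\<lambda>t. x t \<le> M) at_top" by simp
  with assms(2) have "eventually (\<lambda>t. A \<le> M) (at_top :: real filter)"
    by eventually_elim auto
  then show "A \<le> M" by simp
qed

lemma Bfun_uminus: "Bfun x F \<Longrightarrow> Bfun (\<lambda>t. - x t) F"
  for x :: "'a \<Rightarrow> real"
  by (simp add: Bfun_def)

lemma eventually_liminf_le_at_top: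
  assumes "Bfun x at_top" "\<epsilon> > 0"
  shows "eventually (\<lambda>t. liminf_at_top x - \<epsilon> \<le> x t) at_top"
  using eventually_le_limsup_at_top[OF Bfun_uminus[OF assms(1)] assms(2)]
  by eventually_elim (simp add: liminf_at_top_def)

lemma le_liminf_at_top:
  assumes "Bfun x at_top" "\<And>\<epsilon>. \<epsilon> > 0 \<Longrightarrow> eventually (\<lambda>t. M - \<epsilon> \<le> x t) at_top"
  shows "M \<le> liminf_at_top x"
proof -
  have "limsup_at_top (\<lambda>t. - x t) \<le> - M"
  proof (rule limsup_at_top_le[OF Bfun_uminus[OF assms(1)]])
    fix \<epsilon> :: real assume "\<epsilon> > 0"
    from assms(2)[OF this] show "eventually (\<lambda>t. - x t \<le> - M + \<epsilon>) at_top"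
      by eventually_elim simp
  qed
  then show ?thesis by (simp add: liminf_at_top_def)
qed

lemma tendsto_if_limsup_le_liminf:
  assumes "Bfun x at_top" "limsup_at_top x \<le> c" "c \<le> liminf_at_top x"
  shows "(x \<longlongrightarrow> c) at_top"
proof (rule order_tendstoI)
  fix a assume "a < c"
  then have "eventually (\<lambda>t. liminf_at_top x - (c - a) / 2 \<le> x t) at_top"
    by (intro eventually_liminf_le_at_top[OF assms(1)]) simp
  then show "eventually (\<lambda>t. a < x t) at_top"
    by (rule eventually_mono) (use assms(3) \<open>a < c\<close> in \<open>simp add: field_simps\<close>)
next
  fix a assume "c < a"
  then have "eventually (\<lambda>t. x t \<le> limsup_at_top x + (a - c) / 2) at_top"
    by (intro eventually_le_limsup_at_top[OF assms(1)]) simp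
  then show "eventually (\<lambda>t. x t < a) at_top"
    by (rule eventually_mono) (use assms(2) \<open>c < a\<close> in \<open>simp add: field_simps\<close>)
qed

lemma eventually_shift_at_top:
  "eventually P at_top \<Longrightarrow> eventually (\<lambda>t. P (t - d)) (at_top :: real filter)"
  unfolding eventually_at_top_linorder by (metis add.commute le_diff_eq)

lemma eventually_delayed_le_limsup_at_top:
  assumes "Bfun y at_top" "c > 0" "\<epsilon> > 0"
  shows "eventually (\<lambda>t. c * y (t - d) \<le> c * limsup_at_top y + \<epsilon>) at_top"
proof -
  have "eventually (\<lambda>t. y t \<le> limsup_at_top y + \<epsilon> / c) at_top"
    using assms by (intro eventually_le_limsup_at_top) auto
  from eventually_shift_at_top[OF this, of d] show ?thesis
    by eventually_elim (use assms in \<open>simp add: field_simps\<close>)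
qed

lemma eventually_liminf_le_delayed_at_top:
  assumes "Bfun y at_top" "c > 0" "\<epsilon> > 0"
  shows "eventually (\<lambda>t. c * liminf_at_top y - \<epsilon> \<le> c * y (t - d)) at_top"
proof -
  have "eventually (\<lambda>t. liminf_at_top y - \<epsilon> / c \<le> y t) at_top"
    using assms by (intro eventually_liminf_le_at_top) auto
  from eventually_shift_at_top[OF this, of d] show ?thesis
    by eventually_elim (use assms in \<open>simp add: field_simps\<close>)
qed

lemma eventually_delayed_le:
  fixes y :: "real \<Rightarrow> real"
  assumes "eventually (\<lambda>t. y t \<le> B) at_top" "0 \<le> c"
  shows "eventually (\<lambda>t. c * y (t - d) \<le> c * B) (at_top :: real filter)"
  using eventually_shift_at_top[OF assms(1), of d] by eventually_elim (rule mult_left_mono[OF _ assms(2)])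

lemma limsup_linear_ode_le:
  fixes x f :: "real \<Rightarrow> real"
  assumes "k > 0" "Bfun x at_top"
    and der: "\<And>t. a \<le> t \<Longrightarrow> (x has_real_derivative f t - k * x t) (at t within {a..})"
    and forcing: "\<And>\<epsilon>. \<epsilon> > 0 \<Longrightarrow> eventually (\<lambda>t. f t \<le> F + \<epsilon>) at_top"
  shows "limsup_at_top x \<le> F / k"
  using assms by (intro limsup_at_top_le linear_ode_eventually_le) auto

lemma liminf_linear_ode_ge:
  fixes x f :: "real \<Rightarrow> real"
  assumes "k > 0" "Bfun x at_top"
    and der: "\<And>t. a \<le> t \<Longrightarrow> (x has_real_derivative f t - k * x t) (at t within {a..})"
    and forcing: "\<And>\<epsilon>. \<epsilon> > 0 \<Longrightarrow> eventually (\<lambda>t. F - \<epsilon> \<le> f t) at_top"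
  shows "F / k \<le> liminf_at_top x"
proof -
  have "limsup_at_top (\<lambda>t. - x t) \<le> - F / k"
  proof (rule limsup_linear_ode_le[where f = "\<lambda>t. - f t"])
    show "((\<lambda>t. - x t) has_real_derivative - f t - k * - x t) (at t within {a..})" if "a \<le> t" for t
      using der[OF that] by (auto intro!: derivative_eq_intros)
    show "eventually (\<lambda>t. - f t \<le> - F + \<epsilon>) at_top" if "\<epsilon> > 0" for \<epsilon>
      using forcing[OF that] by eventually_elim simp
  qed (use assms Bfun_uminus in auto)
  then show ?thesis by (simp add: liminf_at_top_def)
qed

locale model =
  fixes p :: par
  assumes admissible: "admissible p"
begin

text \<open>In these constants the system reads \<open>L' = c1 Af(t - \<tau>1) - k1 L\<close>, \<open>N' = r1 g(L) - k2 N\<close>,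
  \<open>Aq' = r2 N - k3 Aq\<close>, \<open>Af' = c4 Aq(t - \<tau>2) - k4 Af\<close>, and \<open>R0 = loop_gain * g'(0)\<close>.\<close>

definition "k1 = pd1 p + pr1 p"
definition "k2 = pd2 p + pr2 p"
definition "k3 = pd3 p + pr3 p"
definition "k4 = pd4 p + pr4 p"
definition "c1 = pb p * pr4 p * exp (- pd4 p * ptau1 p)"
definition "c4 = pr3 p / 2 * exp (- pd3 p * ptau2 p)"
definition "loop_gain = c1 * c4 * pr2 p * pr1 p / (k1 * k2 * k3 * k4)"

abbreviation "g \<equiv> gfun p"
abbreviation "\<tau> \<equiv> ptau p"

lemma params_pos:
  "pr1 p > 0" "pr2 p > 0" "ptau1 p > 0" "ptau2 p > 0" "pNcap p > 0" "ph p > 0"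
  using admissible by (auto simp: admissible_def)

lemma rates_pos: "k1 > 0" "k2 > 0" "k3 > 0" "k4 > 0" "c1 > 0" "c4 > 0"
  using admissible by (auto simp: admissible_def k1_def k2_def k3_def k4_def c1_def c4_def)

lemma delays_le_tau: "ptau1 p \<le> \<tau>" "ptau2 p \<le> \<tau>"
  by (auto simp: ptau_def)

lemma tau_pos: "0 < \<tau>"
  using params_pos by (simp add: ptau_def)

lemma R0_eq: "R0 p = loop_gain * (pNcap p / ph p)"
proof -
  have "exp (- (pd4 p * ptau1 p + pd3 p * ptau2 p)) = exp (- pd4 p * ptau1 p) * exp (- pd3 p * ptau2 p)"
    by (simp flip: exp_add)
  then show ?thesis
    using params_pos unfolding R0_def loop_gain_def c1_def c4_def k1_def k2_def k3_def k4_def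
    by (simp add: field_simps)
qed

lemma g_nonneg: "0 \<le> x \<Longrightarrow> 0 \<le> g x"
  using params_pos by (simp add: gfun_def)

lemma g_pos: "0 < x \<Longrightarrow> 0 < g x"
  using params_pos by (simp add: gfun_def)

lemma g_le_Ncap: "0 \<le> x \<Longrightarrow> g x \<le> pNcap p"
  using params_pos by (simp add: gfun_def divide_le_eq)

lemma g_le_linear: "0 \<le> x \<Longrightarrow> g x \<le> pNcap p / ph p * x"
  using params_pos by (simp add: gfun_def field_simps mult_left_mono)

lemma g_diff: "0 \<le> x \<Longrightarrow> 0 \<le> y \<Longrightarrow> g y - g x = pNcap p * ph p * (y - x) / ((ph p + x) * (ph p + y))"
  using params_pos by (simp add: gfun_def field_simps)

lemma g_mono:
  assumes "0 \<le> x" "x \<le> y"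
  shows "g x \<le> g y"
proof -
  have "0 \<le> g y - g x" using assms params_pos by (subst g_diff) auto
  then show ?thesis by simp
qed

lemma g_lipschitz_up:
  assumes "0 \<le> x" "0 \<le> y" "0 \<le> d" "y \<le> x + d"
  shows "g y \<le> g x + pNcap p / ph p * d"
proof (cases "y \<le> x")
  case True
  then have "g y \<le> g x" using assms by (intro g_mono) auto
  moreover have "0 \<le> pNcap p / ph p * d" using True assms params_pos by simp
  ultimately show ?thesis by linarith
next
  case False
  have "ph p * ph p \<le> (ph p + x) * (ph p + y)"
    using assms params_pos by (intro mult_mono) auto
  then have "pNcap p * ph p * (y - x) / ((ph p + x) * (ph p + y))
      \<le> pNcap p * ph p * (y - x) / (ph p * ph p)"
    using False assms params_pos by (intro divide_left_mono) auto
  also have "\<dots> = pNcap p / ph p * (y - x)" using params_pos by (simp add: field_simps)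
  also have "\<dots> \<le> pNcap p / ph p * d" using assms params_pos by (intro mult_left_mono) auto
  finally show ?thesis using assms by (subst (asm) g_diff[symmetric]) auto
qed

lemma g_scale_ge:
  assumes "0 \<le> x" "0 \<le> s" "s \<le> 1"
  shows "s * g x \<le> g (s * x)"
proof -
  have "ph p + s * x \<le> ph p + x" using assms by (simp add: mult_left_le_one_le)
  then have "pNcap p * x / (ph p + x) \<le> pNcap p * x / (ph p + s * x)"
    using assms params_pos by (intro divide_left_mono) (auto intro!: mult_pos_pos add_pos_nonneg)
  then have "s * (pNcap p * x / (ph p + x)) \<le> s * (pNcap p * x / (ph p + s * x))"
    using assms by (intro mult_left_mono) auto
  then show ?thesis by (simp add: gfun_def mult.left_commute)
qed

lemma g_scale_le:
  assumes "0 \<le> x" "1 \<le> s"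
  shows "g (s * x) \<le> s * g x"
proof -
  have "ph p + x \<le> ph p + s * x" using assms by (simp add: mult_le_cancel_right1)
  then have "pNcap p * x / (ph p + s * x) \<le> pNcap p * x / (ph p + x)"
    using assms params_pos by (intro divide_left_mono) auto
  then have "s * (pNcap p * x / (ph p + s * x)) \<le> s * (pNcap p * x / (ph p + x))"
    using assms by (intro mult_left_mono) auto
  then show ?thesis by (simp add: gfun_def mult.left_commute)
qed

text \<open>The right-hand side on constant histories.  Its zeros are the equilibria; constant vectors
  \<open>m\<close> with \<open>0 \<le> rhs m\<close> (\<open>rhs m \<le> 0\<close>) are called lower (upper) solutions.\<close>

definition rhs :: "real \<times> real \<times> real \<times> real \<Rightarrow> real \<times> real \<times> real \<times> real" where
  "rhs = (\<lambda>(x1, x2, x3, x4).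
     (c1 * x4 - k1 * x1, pr1 p * g x1 - k2 * x2, pr2 p * x2 - k3 * x3, c4 * x3 - k4 * x4))"

text \<open>\<open>eq_curve x\<close> solves the last three equilibrium equations with \<open>L = x\<close>; the first one
  then reads \<open>x = loop_gain * g x\<close>, whose positive root is \<open>Lstar\<close> when \<open>R0 > 1\<close>.\<close>

definition eq_curve :: "real \<Rightarrow> real \<times> real \<times> real \<times> real" where
  "eq_curve x = (x, pr1 p * g x / k2, pr2 p * pr1 p * g x / (k2 * k3),
     c4 * pr2 p * pr1 p * g x / (k2 * k3 * k4))"

definition "Lstar = loop_gain * pNcap p - ph p"

lemma rhs_zero: "rhs 0 = 0"
  by (simp add: rhs_def zero_prod_def gfun_def)

lemma is_equilibrium_iff_rhs: "is_equilibrium p e \<longleftrightarrow> rhs e = 0"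
  by (cases e) (simp add: is_equilibrium_def rhs_def zero_prod_def k1_def k2_def k3_def k4_def c1_def c4_def)

lemma rhs_eq_curve: "rhs (eq_curve x) = (k1 * (loop_gain * g x - x), 0, 0, 0)"
  using rates_pos by (simp add: rhs_def eq_curve_def loop_gain_def field_simps)

lemma eq_curve_mono: "0 \<le> x \<Longrightarrow> x \<le> y \<Longrightarrow> eq_curve x \<le> eq_curve y"
  using g_mono[of x y] rates_pos params_pos
  by (simp add: eq_curve_def divide_right_mono mult_left_mono)

lemma eq_curve_identities:
  assumes "eq_curve x = (x, n2, n3, n4)"
  shows "c1 * n4 = k1 * (loop_gain * g x)" "pr1 p * g x = k2 * n2"
    "pr2 p * n2 = k3 * n3" "c4 * n3 = k4 * n4"
  using rhs_eq_curve[of x] assms by (simp_all add: rhs_def algebra_simps)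

lemma lower_solution_le_eq_curve:
  assumes "0 \<le> rhs m"
  shows "m \<le> eq_curve (fst m)" "fst m \<le> loop_gain * g (fst m)"
proof -
  obtain m1 m2 m3 m4 where m: "m = (m1, m2, m3, m4)" by (cases m) auto
  obtain n2 n3 n4 where n: "eq_curve m1 = (m1, n2, n3, n4)" by (simp add: eq_curve_def)
  note e = eq_curve_identities[OF n]
  have r: "k1 * m1 \<le> c1 * m4" "k2 * m2 \<le> pr1 p * g m1" "k3 * m3 \<le> pr2 p * m2" "k4 * m4 \<le> c4 * m3"
    using assms by (auto simp: m rhs_def zero_prod_def)
  have "k2 * m2 \<le> k2 * n2" using r(2) e(2) by simp
  then have 2: "m2 \<le> n2" using rates_pos by simp
  have "pr2 p * m2 \<le> pr2 p * n2" using 2 params_pos by simp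
  then have "k3 * m3 \<le> k3 * n3" using r(3) e(3) by linarith
  then have 3: "m3 \<le> n3" using rates_pos by simp
  have "c4 * m3 \<le> c4 * n3" using 3 rates_pos by simp
  then have "k4 * m4 \<le> k4 * n4" using r(4) e(4) by linarith
  then have 4: "m4 \<le> n4" using rates_pos by simp
  have "c1 * m4 \<le> c1 * n4" using 4 rates_pos by simp
  then have "k1 * m1 \<le> k1 * (loop_gain * g m1)" using r(1) e(1) by linarith
  then show "fst m \<le> loop_gain * g (fst m)" using rates_pos by (simp add: m)
  show "m \<le> eq_curve (fst m)" using 2 3 4 by (simp add: m n)
qed

lemma upper_solution_ge_eq_curve:
  assumes "rhs m \<le> 0"
  shows "eq_curve (fst m) \<le> m" "loop_gain * g (fst m) \<le> fst m"
proof -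
  obtain m1 m2 m3 m4 where m: "m = (m1, m2, m3, m4)" by (cases m) auto
  obtain n2 n3 n4 where n: "eq_curve m1 = (m1, n2, n3, n4)" by (simp add: eq_curve_def)
  note e = eq_curve_identities[OF n]
  have r: "c1 * m4 \<le> k1 * m1" "pr1 p * g m1 \<le> k2 * m2" "pr2 p * m2 \<le> k3 * m3" "c4 * m3 \<le> k4 * m4"
    using assms by (auto simp: m rhs_def zero_prod_def)
  have "k2 * n2 \<le> k2 * m2" using r(2) e(2) by simp
  then have 2: "n2 \<le> m2" using rates_pos by simp
  have "pr2 p * n2 \<le> pr2 p * m2" using 2 params_pos by simp
  then have "k3 * n3 \<le> k3 * m3" using r(3) e(3) by linarith
  then have 3: "n3 \<le> m3" using rates_pos by simp
  have "c4 * n3 \<le> c4 * m3" using 3 rates_pos by simp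
  then have "k4 * n4 \<le> k4 * m4" using r(4) e(4) by linarith
  then have 4: "n4 \<le> m4" using rates_pos by simp
  have "c1 * n4 \<le> c1 * m4" using 4 rates_pos by simp
  then have "k1 * (loop_gain * g m1) \<le> k1 * m1" using r(1) e(1) by linarith
  then show "loop_gain * g (fst m) \<le> fst m" using rates_pos by (simp add: m)
  show "eq_curve (fst m) \<le> m" using 2 3 4 by (simp add: m n)
qed

lemma le_gain_iff:
  assumes "0 < x"
  shows "x \<le> loop_gain * g x \<longleftrightarrow> x \<le> Lstar"
proof -
  have "x \<le> loop_gain * g x \<longleftrightarrow> x * (ph p + x) \<le> x * (loop_gain * pNcap p)"
    using assms params_pos by (simp add: gfun_def le_divide_eq algebra_simps)
  also have "\<dots> \<longleftrightarrow> ph p + x \<le> loop_gain * pNcap p"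
    using assms by (rule mult_le_cancel_left_pos)
  also have "\<dots> \<longleftrightarrow> x \<le> Lstar"
    by (auto simp: Lstar_def)
  finally show ?thesis .
qed

lemma gain_le_iff:
  assumes "0 < x"
  shows "loop_gain * g x \<le> x \<longleftrightarrow> Lstar \<le> x"
proof -
  have "loop_gain * g x \<le> x \<longleftrightarrow> x * (loop_gain * pNcap p) \<le> x * (ph p + x)"
    using assms params_pos by (simp add: gfun_def divide_le_eq algebra_simps)
  also have "\<dots> \<longleftrightarrow> loop_gain * pNcap p \<le> ph p + x"
    using assms by (rule mult_le_cancel_left_pos)
  also have "\<dots> \<longleftrightarrow> Lstar \<le> x"
    by (auto simp: Lstar_def)
  finally show ?thesis .
qed

lemma lower_solution_le_eq_curve_Lstar:
  assumes "0 \<le> m" "0 \<le> rhs m"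
  shows "m \<le> eq_curve (max 0 Lstar)"
proof -
  have "0 \<le> fst m" using assms(1) by (simp add: less_eq_prod_def)
  have "fst m \<le> max 0 Lstar"
  proof (cases "fst m = 0")
    case False
    with \<open>0 \<le> fst m\<close> have "0 < fst m" by simp
    then show ?thesis using lower_solution_le_eq_curve(2)[OF assms(2)] le_gain_iff by auto
  qed simp
  then show ?thesis
    using lower_solution_le_eq_curve(1)[OF assms(2)] eq_curve_mono[OF \<open>0 \<le> fst m\<close>]
    by (blast intro: order_trans)
qed

lemma eq_curve_Lstar_le_upper_solution:
  assumes "0 \<le> Lstar" "0 < fst m" "rhs m \<le> 0"
  shows "eq_curve Lstar \<le> m"
proof -
  have "Lstar \<le> fst m"
    using upper_solution_ge_eq_curve(2)[OF assms(3)] gain_le_iff assms(2) by auto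
  then show ?thesis
    using upper_solution_ge_eq_curve(1)[OF assms(3)] eq_curve_mono[OF assms(1)]
    by (blast intro: order_trans)
qed

lemma R0_gt_1_iff: "1 < R0 p \<longleftrightarrow> 0 < Lstar"
  using params_pos by (simp add: R0_eq Lstar_def field_simps)

lemma eq_curve_pos:
  assumes "0 < x"
  shows "0 < fst (eq_curve x) \<and> 0 < fst (snd (eq_curve x)) \<and>
    0 < fst (snd (snd (eq_curve x))) \<and> 0 < snd (snd (snd (eq_curve x)))"
  using assms g_pos[OF assms] rates_pos params_pos by (simp add: eq_curve_def)

lemma rhs_eq_curve_Lstar: "0 < Lstar \<Longrightarrow> rhs (eq_curve Lstar) = 0"
  using le_gain_iff[of Lstar] gain_le_iff[of Lstar] by (simp add: rhs_eq_curve zero_prod_def)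

lemma eq_curve_zero: "eq_curve 0 = 0"
  by (simp add: eq_curve_def gfun_def zero_prod_def)

lemma positive_equilibrium_unique:
  assumes "is_equilibrium p e" "0 < fst e"
  shows "e = eq_curve Lstar"
proof -
  have "rhs e = 0" using assms(1) by (simp add: is_equilibrium_iff_rhs)
  then have "e = eq_curve (fst e)" "fst e = loop_gain * g (fst e)"
    using lower_solution_le_eq_curve[of e] upper_solution_ge_eq_curve[of e] by (simp_all add: order.antisym)
  moreover have "fst e = Lstar"
    using le_gain_iff[OF assms(2)] gain_le_iff[OF assms(2)] \<open>fst e = loop_gain * g (fst e)\<close> by simp
  ultimately show ?thesis by simp
qed

lemma rhs_scale_lower:
  assumes "0 \<le> fst x" "0 \<le> s" "s \<le> 1"
  shows "s *\<^sub>R rhs x \<le> rhs (s *\<^sub>R x)"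
  using g_scale_ge[of "fst x" s] assms params_pos
  by (cases x) (auto simp: rhs_def algebra_simps)

lemma rhs_scale_upper:
  assumes "0 \<le> fst x" "1 \<le> s"
  shows "rhs (s *\<^sub>R x) \<le> s *\<^sub>R rhs x"
  using g_scale_le[of "fst x" s] assms params_pos
  by (cases x) (auto simp: rhs_def algebra_simps)

text \<open>The analogue of \<open>eq_curve 1\<close> for the tangent \<open>g'(0) x\<close> of \<open>g\<close> at \<open>0\<close>, which majorises \<open>g\<close>.\<close>

definition lin_vec :: "real \<times> real \<times> real \<times> real" where
  "lin_vec = (1, pr1 p * (pNcap p / ph p) / k2, pr2 p * pr1 p * (pNcap p / ph p) / (k2 * k3),
     c4 * pr2 p * pr1 p * (pNcap p / ph p) / (k2 * k3 * k4))"

lemma lin_vec_pos: "0 < fst (snd lin_vec) \<and> 0 < fst (snd (snd lin_vec)) \<and> 0 < snd (snd (snd lin_vec))"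
  using params_pos rates_pos by (simp add: lin_vec_def)

lemma rhs_scaled_lin_vec_nonpos:
  assumes "R0 p \<le> 1" "0 \<le> \<sigma>"
  shows "rhs (\<sigma> *\<^sub>R lin_vec) \<le> 0"
proof -
  obtain v2 v3 v4 where v: "lin_vec = (1, v2, v3, v4)" by (simp add: lin_vec_def)
  have e: "c1 * v4 = k1 * R0 p" "pr1 p * (pNcap p / ph p) = k2 * v2"
    "pr2 p * v2 = k3 * v3" "c4 * v3 = k4 * v4"
    using v rates_pos by (auto simp: lin_vec_def R0_eq loop_gain_def field_simps)
  have "c1 * (\<sigma> * v4) = \<sigma> * (k1 * R0 p)" using e(1) by (metis mult.left_commute)
  also have "\<dots> \<le> \<sigma> * k1"
    using assms rates_pos by (intro mult_left_mono mult_left_le) auto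
  finally have L: "c1 * (\<sigma> * v4) \<le> k1 * \<sigma>" by (simp add: mult.commute)
  have "pr1 p * g \<sigma> \<le> pr1 p * (pNcap p / ph p * \<sigma>)"
    using g_le_linear[OF assms(2)] params_pos by (intro mult_left_mono) auto
  also have "\<dots> = k2 * (\<sigma> * v2)"
    using e(2) by (metis mult.assoc mult.commute)
  finally have N: "pr1 p * g \<sigma> \<le> k2 * (\<sigma> * v2)" .
  show ?thesis
    using L N e(3,4) by (simp add: v rhs_def zero_prod_def algebra_simps)
qed

end

section \<open>Solutions with nonnegative initial data\<close>

locale nonneg_solution = model +
  fixes L N Aq Af :: "real \<Rightarrow> real"
  assumes is_solution: "is_solution p L N Aq Af"
    and nonneg_init: "nonneg_init p L N Aq Af"
begin

definition "state t = (L t, N t, Aq t, Af t)"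

lemma continuous:
  "continuous_on {-\<tau>..} L" "continuous_on {-\<tau>..} N"
  "continuous_on {-\<tau>..} Aq" "continuous_on {-\<tau>..} Af"
  using is_solution by (auto simp: is_solution_def)

lemma solution_derivs:
  assumes "0 \<le> t"
  shows "(L has_real_derivative c1 * Af (t - ptau1 p) - k1 * L t) (at t within {0..})"
    and "(N has_real_derivative pr1 p * g (L t) - k2 * N t) (at t within {0..})"
    and "(Aq has_real_derivative pr2 p * N t - k3 * Aq t) (at t within {0..})"
    and "(Af has_real_derivative c4 * Aq (t - ptau2 p) - k4 * Af t) (at t within {0..})"
  using is_solution assms
  by (auto simp: is_solution_def c1_def c4_def k1_def k2_def k3_def k4_def)

lemma solution_derivs_on:
  assumes "0 \<le> a" "t \<in> {a..b}"
  shows "(L has_real_derivative c1 * Af (t - ptau1 p) - k1 * L t) (at t within {a..b})"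
    and "(N has_real_derivative pr1 p * g (L t) - k2 * N t) (at t within {a..b})"
    and "(Aq has_real_derivative pr2 p * N t - k3 * Aq t) (at t within {a..b})"
    and "(Af has_real_derivative c4 * Aq (t - ptau2 p) - k4 * Af t) (at t within {a..b})"
  using assms
  by (auto intro: has_field_derivative_subset[OF solution_derivs(1)]
      has_field_derivative_subset[OF solution_derivs(2)]
      has_field_derivative_subset[OF solution_derivs(3)]
      has_field_derivative_subset[OF solution_derivs(4)])

text \<open>Method of steps: for \<open>t \<le> b + min \<tau>1 \<tau>2\<close> the delayed arguments lie in the already
  controlled past \<open>[b - \<tau>, b]\<close>.\<close>

lemma lower_solution_step:
  assumes "0 \<le> m" "0 \<le> rhs m" "0 \<le> b"
    and past: "\<And>s. s \<in> {b - \<tau>..b} \<Longrightarrow> m \<le> state s"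
    and t: "t \<in> {b..b + min (ptau1 p) (ptau2 p)}"
  shows "m \<le> state t"
proof -
  obtain m1 m2 m3 m4 where m: "m = (m1, m2, m3, m4)" by (cases m) auto
  have r: "k1 * m1 \<le> c1 * m4" "k2 * m2 \<le> pr1 p * g m1" "k3 * m3 \<le> pr2 p * m2" "k4 * m4 \<le> c4 * m3"
    using assms(2) by (auto simp: m rhs_def zero_prod_def)
  have "0 \<le> m1" using assms(1) by (simp add: m zero_prod_def)
  have at_b: "m1 \<le> L b" "m2 \<le> N b" "m3 \<le> Aq b" "m4 \<le> Af b"
    using past[of b] params_pos by (auto simp: m state_def ptau_def)
  have delayed: "m4 \<le> Af (s - ptau1 p)" "m3 \<le> Aq (s - ptau2 p)" if "s \<in> {b..t}" for s
    using that t past[of "s - ptau1 p"] past[of "s - ptau2 p"] delays_le_tau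
    by (auto simp: m state_def)
  have L: "m1 \<le> L s" if "s \<in> {b..t}" for s
  proof (rule linear_ode_lower_bound[where a = b and x = L and f = "\<lambda>s. c1 * Af (s - ptau1 p)" and k = k1])
    show "k1 * m1 \<le> c1 * Af (s' - ptau1 p)" if "s' \<in> {b..s}" for s'
      using r(1) delayed(1)[of s'] that \<open>s \<in> {b..t}\<close> rates_pos
      by (smt (verit) atLeastAtMost_iff mult_left_mono)
  qed (use that at_b solution_derivs_on \<open>0 \<le> b\<close> in auto)
  have N: "m2 \<le> N s" if "s \<in> {b..t}" for s
  proof (rule linear_ode_lower_bound[where a = b and x = N and f = "\<lambda>s. pr1 p * g (L s)" and k = k2])
    show "k2 * m2 \<le> pr1 p * g (L s')" if "s' \<in> {b..s}" for s'
      using r(2) g_mono[OF \<open>0 \<le> m1\<close> L[of s']] that \<open>s \<in> {b..t}\<close> params_pos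
      by (smt (verit) atLeastAtMost_iff mult_left_mono)
  qed (use that at_b solution_derivs_on \<open>0 \<le> b\<close> in auto)
  have Aq: "m3 \<le> Aq s" if "s \<in> {b..t}" for s
  proof (rule linear_ode_lower_bound[where a = b and x = Aq and f = "\<lambda>s. pr2 p * N s" and k = k3])
    show "k3 * m3 \<le> pr2 p * N s'" if "s' \<in> {b..s}" for s'
      using r(3) N[of s'] that \<open>s \<in> {b..t}\<close> params_pos
      by (smt (verit) atLeastAtMost_iff mult_left_mono)
  qed (use that at_b solution_derivs_on \<open>0 \<le> b\<close> in auto)
  have Af: "m4 \<le> Af t"
  proof (rule linear_ode_lower_bound[where a = b and x = Af and f = "\<lambda>s. c4 * Aq (s - ptau2 p)" and k = k4])
    show "k4 * m4 \<le> c4 * Aq (s - ptau2 p)" if "s \<in> {b..t}" for s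
      using r(4) delayed(2)[OF that] rates_pos by (smt (verit) mult_left_mono)
  qed (use t at_b solution_derivs_on \<open>0 \<le> b\<close> in auto)
  show ?thesis using L N Aq Af t by (simp add: m state_def)
qed

lemma lower_solution_invariant:
  assumes "0 \<le> m" "0 \<le> rhs m" "0 \<le> T"
    and init: "\<And>s. s \<in> {T - \<tau>..T} \<Longrightarrow> m \<le> state s"
    and "T - \<tau> \<le> t"
  shows "m \<le> state t"
proof (rule extend_by_steps[where a = "T - \<tau>" and c = T and h = "min (ptau1 p) (ptau2 p)"])
  fix b assume "T \<le> b" and past: "\<forall>s\<in>{T - \<tau>..b}. m \<le> state s"
  have step: "m \<le> state s" if "s \<in> {b..b + min (ptau1 p) (ptau2 p)}" for s
  proof (rule lower_solution_step[OF assms(1,2) _ _ that])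
    show "0 \<le> b" using \<open>0 \<le> T\<close> \<open>T \<le> b\<close> by simp
    show "m \<le> state s'" if "s' \<in> {b - \<tau>..b}" for s'
      using past that \<open>T \<le> b\<close> by auto
  qed
  show "\<forall>s\<in>{T - \<tau>..b + min (ptau1 p) (ptau2 p)}. m \<le> state s"
  proof
    fix s assume "s \<in> {T - \<tau>..b + min (ptau1 p) (ptau2 p)}"
    then show "m \<le> state s" using past step by (cases "s \<le> b") auto
  qed
qed (use init \<open>T - \<tau> \<le> t\<close> params_pos in auto)

lemma state_nonneg: "- \<tau> \<le> t \<Longrightarrow> 0 \<le> state t"
proof (rule lower_solution_invariant[where T = 0])
  show "0 \<le> state s" if "s \<in> {0 - \<tau>..0}" for s
    using nonneg_init that by (simp add: nonneg_init_def state_def zero_prod_def)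
qed (simp_all add: rhs_zero)

lemma components_nonneg: "- \<tau> \<le> t \<Longrightarrow> 0 \<le> L t \<and> 0 \<le> N t \<and> 0 \<le> Aq t \<and> 0 \<le> Af t"
  using state_nonneg by (simp add: state_def zero_prod_def)

lemma upper_solution_step:
  assumes "rhs M \<le> 0" "0 \<le> b"
    and past: "\<And>s. s \<in> {b - \<tau>..b} \<Longrightarrow> state s \<le> M"
    and t: "t \<in> {b..b + min (ptau1 p) (ptau2 p)}"
  shows "state t \<le> M"
proof -
  obtain M1 M2 M3 M4 where M: "M = (M1, M2, M3, M4)" by (cases M) auto
  have r: "c1 * M4 \<le> k1 * M1" "pr1 p * g M1 \<le> k2 * M2" "pr2 p * M2 \<le> k3 * M3" "c4 * M3 \<le> k4 * M4"
    using assms(1) by (auto simp: M rhs_def zero_prod_def)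
  have at_b: "L b \<le> M1" "N b \<le> M2" "Aq b \<le> M3" "Af b \<le> M4"
    using past[of b] params_pos by (auto simp: M state_def ptau_def)
  have delayed: "Af (s - ptau1 p) \<le> M4" "Aq (s - ptau2 p) \<le> M3" if "s \<in> {b..t}" for s
    using that t past[of "s - ptau1 p"] past[of "s - ptau2 p"] delays_le_tau
    by (auto simp: M state_def)
  have L: "L s \<le> M1" if "s \<in> {b..t}" for s
  proof (rule linear_ode_upper_bound[where a = b and x = L and f = "\<lambda>s. c1 * Af (s - ptau1 p)" and k = k1])
    show "c1 * Af (s' - ptau1 p) \<le> k1 * M1" if "s' \<in> {b..s}" for s'
      using r(1) delayed(1)[of s'] that \<open>s \<in> {b..t}\<close> rates_pos
      by (smt (verit) atLeastAtMost_iff mult_left_mono)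
  qed (use that at_b solution_derivs_on \<open>0 \<le> b\<close> in auto)
  have N: "N s \<le> M2" if "s \<in> {b..t}" for s
  proof (rule linear_ode_upper_bound[where a = b and x = N and f = "\<lambda>s. pr1 p * g (L s)" and k = k2])
    show "pr1 p * g (L s') \<le> k2 * M2" if "s' \<in> {b..s}" for s'
    proof -
      have "0 \<le> L s'" using components_nonneg[of s'] that \<open>0 \<le> b\<close> tau_pos by simp
      then have "g (L s') \<le> g M1" using g_mono L[of s'] that \<open>s \<in> {b..t}\<close> by simp
      then show ?thesis using r(2) params_pos by (smt (verit) mult_left_mono)
    qed
  qed (use that at_b solution_derivs_on \<open>0 \<le> b\<close> in auto)
  have Aq: "Aq s \<le> M3" if "s \<in> {b..t}" for s
  proof (rule linear_ode_upper_bound[where a = b and x = Aq and f = "\<lambda>s. pr2 p * N s" and k = k3])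
    show "pr2 p * N s' \<le> k3 * M3" if "s' \<in> {b..s}" for s'
      using r(3) N[of s'] that \<open>s \<in> {b..t}\<close> params_pos
      by (smt (verit) atLeastAtMost_iff mult_left_mono)
  qed (use that at_b solution_derivs_on \<open>0 \<le> b\<close> in auto)
  have Af: "Af t \<le> M4"
  proof (rule linear_ode_upper_bound[where a = b and x = Af and f = "\<lambda>s. c4 * Aq (s - ptau2 p)" and k = k4])
    show "c4 * Aq (s - ptau2 p) \<le> k4 * M4" if "s \<in> {b..t}" for s
      using r(4) delayed(2)[OF that] rates_pos by (smt (verit) mult_left_mono)
  qed (use t at_b solution_derivs_on \<open>0 \<le> b\<close> in auto)
  show ?thesis using L N Aq Af t by (simp add: M state_def)
qed

lemma upper_solution_invariant:
  assumes "rhs M \<le> 0" "0 \<le> T"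
    and init: "\<And>s. s \<in> {T - \<tau>..T} \<Longrightarrow> state s \<le> M"
    and "T - \<tau> \<le> t"
  shows "state t \<le> M"
proof (rule extend_by_steps[where a = "T - \<tau>" and c = T and h = "min (ptau1 p) (ptau2 p)"])
  fix b assume "T \<le> b" and past: "\<forall>s\<in>{T - \<tau>..b}. state s \<le> M"
  have step: "state s \<le> M" if "s \<in> {b..b + min (ptau1 p) (ptau2 p)}" for s
  proof (rule upper_solution_step[OF assms(1) _ _ that])
    show "0 \<le> b" using \<open>0 \<le> T\<close> \<open>T \<le> b\<close> by simp
    show "state s' \<le> M" if "s' \<in> {b - \<tau>..b}" for s'
      using past that \<open>T \<le> b\<close> by auto
  qed
  show "\<forall>s\<in>{T - \<tau>..b + min (ptau1 p) (ptau2 p)}. state s \<le> M"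
  proof
    fix s assume "s \<in> {T - \<tau>..b + min (ptau1 p) (ptau2 p)}"
    then show "state s \<le> M" using past step by (cases "s \<le> b") auto
  qed
qed (use init \<open>T - \<tau> \<le> t\<close> params_pos in auto)

lemma eventually_nonneg:
  "eventually (\<lambda>t. 0 \<le> L t) at_top" "eventually (\<lambda>t. 0 \<le> N t) at_top"
  "eventually (\<lambda>t. 0 \<le> Aq t) at_top" "eventually (\<lambda>t. 0 \<le> Af t) at_top"
  using eventually_ge_at_top[of "- \<tau>"] by (eventually_elim, simp add: components_nonneg)+

lemma eventually_bounded_above:
  obtains B where "eventually (\<lambda>t. L t \<le> B \<and> N t \<le> B \<and> Aq t \<le> B \<and> Af t \<le> B) at_top"
proof -
  have bound: "eventually (\<lambda>t. x t \<le> F / k + 1) at_top"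
    if "k > 0" "\<And>t. 0 \<le> t \<Longrightarrow> (x has_real_derivative f t - k * x t) (at t within {0..})"
      "eventually (\<lambda>t. f t \<le> F) at_top" for x f k F
    using that by (intro linear_ode_eventually_le[where a = 0]) (auto elim: eventually_mono)
  define BN where "BN = pr1 p * pNcap p / k2 + 1"
  define BAq where "BAq = pr2 p * BN / k3 + 1"
  define BAf where "BAf = c4 * BAq / k4 + 1"
  define BL where "BL = c1 * BAf / k1 + 1"
  have "eventually (\<lambda>t. pr1 p * g (L t) \<le> pr1 p * pNcap p) at_top"
    using eventually_nonneg(1) by eventually_elim (use g_le_Ncap params_pos in simp)
  then have bN: "eventually (\<lambda>t. N t \<le> BN) at_top"
    unfolding BN_def using rates_pos solution_derivs(2) by (intro bound) auto
  have bAq: "eventually (\<lambda>t. Aq t \<le> BAq) at_top"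
    unfolding BAq_def using eventually_delayed_le[OF bN, of "pr2 p" 0] params_pos rates_pos solution_derivs(3)
    by (intro bound) auto
  have bAf: "eventually (\<lambda>t. Af t \<le> BAf) at_top"
    unfolding BAf_def using eventually_delayed_le[OF bAq, of c4] rates_pos solution_derivs(4)
    by (intro bound) auto
  have bL: "eventually (\<lambda>t. L t \<le> BL) at_top"
    unfolding BL_def using eventually_delayed_le[OF bAf, of c1] rates_pos solution_derivs(1)
    by (intro bound) auto
  show thesis
    by (rule that[of "max (max BL BN) (max BAq BAf)"]) (use bL bN bAq bAf in \<open>eventually_elim, auto\<close>)
qed

lemma Bfun_components: "Bfun L at_top" "Bfun N at_top" "Bfun Aq at_top" "Bfun Af at_top"
proof -
  obtain B where B: "eventually (\<lambda>t. L t \<le> B \<and> N t \<le> B \<and> Aq t \<le> B \<and> Af t \<le> B) at_top"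
    using eventually_bounded_above .
  have abs_le: "eventually (\<lambda>t. \<bar>L t\<bar> \<le> B \<and> \<bar>N t\<bar> \<le> B \<and> \<bar>Aq t\<bar> \<le> B \<and> \<bar>Af t\<bar> \<le> B) at_top"
    using B eventually_nonneg by eventually_elim auto
  show "Bfun L at_top" by (rule BfunI[where K = B], rule eventually_mono[OF abs_le]) simp
  show "Bfun N at_top" by (rule BfunI[where K = B], rule eventually_mono[OF abs_le]) simp
  show "Bfun Aq at_top" by (rule BfunI[where K = B], rule eventually_mono[OF abs_le]) simp
  show "Bfun Af at_top" by (rule BfunI[where K = B], rule eventually_mono[OF abs_le]) simp
qed

definition "limsup_state = (limsup_at_top L, limsup_at_top N, limsup_at_top Aq, limsup_at_top Af)"
definition "liminf_state = (liminf_at_top L, liminf_at_top N, liminf_at_top Aq, liminf_at_top Af)"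

lemma limsup_state_nonneg: "0 \<le> limsup_state"
  by (simp add: limsup_state_def zero_prod_def le_limsup_at_top Bfun_components eventually_nonneg)

lemma liminf_state_nonneg: "0 \<le> liminf_state"
proof -
  have "0 \<le> liminf_at_top x" if "Bfun x at_top" "eventually (\<lambda>t. 0 \<le> x t) at_top" for x
    using that(2) by (intro le_liminf_at_top[OF that(1)]) (auto elim: eventually_mono)
  then show ?thesis by (simp add: liminf_state_def zero_prod_def Bfun_components eventually_nonneg)
qed

lemma eventually_g_L_le_limsup:
  assumes "\<epsilon> > 0"
  shows "eventually (\<lambda>t. pr1 p * g (L t) \<le> pr1 p * g (limsup_at_top L) + \<epsilon>) at_top"
proof -
  define \<delta> where "\<delta> = \<epsilon> / (pr1 p * (pNcap p / ph p))"
  have "\<delta> > 0" using params_pos assms by (simp add: \<delta>_def)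
  have "0 \<le> limsup_at_top L" using limsup_state_nonneg by (simp add: limsup_state_def zero_prod_def)
  from eventually_le_limsup_at_top[OF Bfun_components(1) \<open>\<delta> > 0\<close>] eventually_nonneg(1)
  show ?thesis
  proof eventually_elim
    case (elim t)
    then have "g (L t) \<le> g (limsup_at_top L) + pNcap p / ph p * \<delta>"
      using \<open>0 \<le> limsup_at_top L\<close> \<open>\<delta> > 0\<close> by (intro g_lipschitz_up) auto
    then have "pr1 p * g (L t) \<le> pr1 p * (g (limsup_at_top L) + pNcap p / ph p * \<delta>)"
      using params_pos by (simp add: mult_left_mono)
    also have "\<dots> = pr1 p * g (limsup_at_top L) + \<epsilon>"
      using params_pos by (simp add: \<delta>_def field_simps)
    finally show ?case .
  qed
qed

lemma eventually_liminf_g_L_le: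
  assumes "\<epsilon> > 0"
  shows "eventually (\<lambda>t. pr1 p * g (liminf_at_top L) - \<epsilon> \<le> pr1 p * g (L t)) at_top"
proof -
  define \<delta> where "\<delta> = \<epsilon> / (pr1 p * (pNcap p / ph p))"
  have "\<delta> > 0" using params_pos assms by (simp add: \<delta>_def)
  have "0 \<le> liminf_at_top L" using liminf_state_nonneg by (simp add: liminf_state_def zero_prod_def)
  from eventually_liminf_le_at_top[OF Bfun_components(1) \<open>\<delta> > 0\<close>] eventually_nonneg(1)
  show ?thesis
  proof eventually_elim
    case (elim t)
    then have "g (liminf_at_top L) \<le> g (L t) + pNcap p / ph p * \<delta>"
      using \<open>0 \<le> liminf_at_top L\<close> \<open>\<delta> > 0\<close> by (intro g_lipschitz_up) auto
    then have "pr1 p * g (liminf_at_top L) \<le> pr1 p * (g (L t) + pNcap p / ph p * \<delta>)"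
      using params_pos by (simp add: mult_left_mono)
    also have "\<dots> = pr1 p * g (L t) + \<epsilon>"
      using params_pos by (simp add: \<delta>_def field_simps)
    finally show ?case by simp
  qed
qed

lemma rhs_limsup_state_nonneg: "0 \<le> rhs limsup_state"
proof -
  obtain U1 U2 U3 U4 where U: "limsup_state = (U1, U2, U3, U4)" by (cases limsup_state) auto
  have "limsup_at_top L \<le> c1 * U4 / k1"
  proof (rule limsup_linear_ode_le[where a = 0, OF rates_pos(1) Bfun_components(1) solution_derivs(1)])
    show "eventually (\<lambda>t. c1 * Af (t - ptau1 p) \<le> c1 * U4 + \<epsilon>) at_top" if "\<epsilon> > 0" for \<epsilon>
      using eventually_delayed_le_limsup_at_top[OF Bfun_components(4) rates_pos(5) that] U
      by (simp add: limsup_state_def)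
  qed
  moreover have "limsup_at_top N \<le> pr1 p * g U1 / k2"
    using eventually_g_L_le_limsup U
    by (intro limsup_linear_ode_le[where a = 0, OF rates_pos(2) Bfun_components(2) solution_derivs(2)])
      (auto simp: limsup_state_def)
  moreover have "limsup_at_top Aq \<le> pr2 p * U2 / k3"
  proof (rule limsup_linear_ode_le[where a = 0, OF rates_pos(3) Bfun_components(3) solution_derivs(3)])
    show "eventually (\<lambda>t. pr2 p * N t \<le> pr2 p * U2 + \<epsilon>) at_top" if "\<epsilon> > 0" for \<epsilon>
      using eventually_delayed_le_limsup_at_top[OF Bfun_components(2) params_pos(2) that, of 0] U
      by (simp add: limsup_state_def)
  qed
  moreover have "limsup_at_top Af \<le> c4 * U3 / k4"
  proof (rule limsup_linear_ode_le[where a = 0, OF rates_pos(4) Bfun_components(4) solution_derivs(4)])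
    show "eventually (\<lambda>t. c4 * Aq (t - ptau2 p) \<le> c4 * U3 + \<epsilon>) at_top" if "\<epsilon> > 0" for \<epsilon>
      using eventually_delayed_le_limsup_at_top[OF Bfun_components(3) rates_pos(6) that] U
      by (simp add: limsup_state_def)
  qed
  ultimately show ?thesis
    using rates_pos U by (simp add: limsup_state_def rhs_def zero_prod_def pos_le_divide_eq mult.commute)
qed

lemma rhs_liminf_state_nonpos: "rhs liminf_state \<le> 0"
proof -
  obtain l1 l2 l3 l4 where l: "liminf_state = (l1, l2, l3, l4)" by (cases liminf_state) auto
  have "c1 * l4 / k1 \<le> liminf_at_top L"
  proof (rule liminf_linear_ode_ge[where a = 0, OF rates_pos(1) Bfun_components(1) solution_derivs(1)])
    show "eventually (\<lambda>t. c1 * l4 - \<epsilon> \<le> c1 * Af (t - ptau1 p)) at_top" if "\<epsilon> > 0" for \<epsilon>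
      using eventually_liminf_le_delayed_at_top[OF Bfun_components(4) rates_pos(5) that] l
      by (simp add: liminf_state_def)
  qed
  moreover have "pr1 p * g l1 / k2 \<le> liminf_at_top N"
    using eventually_liminf_g_L_le l
    by (intro liminf_linear_ode_ge[where a = 0, OF rates_pos(2) Bfun_components(2) solution_derivs(2)])
      (auto simp: liminf_state_def)
  moreover have "pr2 p * l2 / k3 \<le> liminf_at_top Aq"
  proof (rule liminf_linear_ode_ge[where a = 0, OF rates_pos(3) Bfun_components(3) solution_derivs(3)])
    show "eventually (\<lambda>t. pr2 p * l2 - \<epsilon> \<le> pr2 p * N t) at_top" if "\<epsilon> > 0" for \<epsilon>
      using eventually_liminf_le_delayed_at_top[OF Bfun_components(2) params_pos(2) that, of 0] l
      by (simp add: liminf_state_def)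
  qed
  moreover have "c4 * l3 / k4 \<le> liminf_at_top Af"
  proof (rule liminf_linear_ode_ge[where a = 0, OF rates_pos(4) Bfun_components(4) solution_derivs(4)])
    show "eventually (\<lambda>t. c4 * l3 - \<epsilon> \<le> c4 * Aq (t - ptau2 p)) at_top" if "\<epsilon> > 0" for \<epsilon>
      using eventually_liminf_le_delayed_at_top[OF Bfun_components(3) rates_pos(6) that] l
      by (simp add: liminf_state_def)
  qed
  ultimately show ?thesis
    using rates_pos l by (simp add: liminf_state_def rhs_def zero_prod_def pos_divide_le_eq mult.commute)
qed

lemma tendsto_if_limits_bracket:
  assumes "limsup_state \<le> (e1, e2, e3, e4)" "(e1, e2, e3, e4) \<le> liminf_state"
  shows "(L \<longlongrightarrow> e1) at_top \<and> (N \<longlongrightarrow> e2) at_top \<and> (Aq \<longlongrightarrow> e3) at_top \<and> (Af \<longlongrightarrow> e4) at_top"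
  using assms Bfun_components by (auto simp: limsup_state_def liminf_state_def intro: tendsto_if_limsup_le_liminf)

lemma N_pos_after:
  assumes "0 \<le> a" "a < b" "\<And>s. s \<in> {a<..<b} \<Longrightarrow> 0 < L s" "a < t"
  shows "0 < N t"
  using assms components_nonneg params_pos g_nonneg g_pos tau_pos
  by (intro linear_ode_positive_after[OF _ _ _ solution_derivs(2), of a b]) auto

lemma Aq_pos_after:
  assumes "0 \<le> a" "a < b" "\<And>s. s \<in> {a<..<b} \<Longrightarrow> 0 < N s" "a < t"
  shows "0 < Aq t"
  using assms components_nonneg params_pos tau_pos
  by (intro linear_ode_positive_after[OF _ _ _ solution_derivs(3), of a b]) auto

lemma Af_pos_after:
  assumes "0 \<le> a + ptau2 p" "a < b" "\<And>s. s \<in> {a<..<b} \<Longrightarrow> 0 < Aq s" "a + ptau2 p < t"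
  shows "0 < Af t"
proof (rule linear_ode_positive_after[OF assms(1) _ assms(4) solution_derivs(4), of "b + ptau2 p"])
  show "0 \<le> c4 * Aq (s - ptau2 p)" if "a + ptau2 p \<le> s" for s
    using components_nonneg[of "s - ptau2 p"] that assms(1) delays_le_tau rates_pos by simp
qed (use assms rates_pos components_nonneg tau_pos in auto)

lemma L_pos_after:
  assumes "0 \<le> a + ptau1 p" "a < b" "\<And>s. s \<in> {a<..<b} \<Longrightarrow> 0 < Af s" "a + ptau1 p < t"
  shows "0 < L t"
proof (rule linear_ode_positive_after[OF assms(1) _ assms(4) solution_derivs(1), of "b + ptau1 p"])
  show "0 \<le> c1 * Af (s - ptau1 p)" if "a + ptau1 p \<le> s" for s
    using components_nonneg[of "s - ptau1 p"] that assms(1) delays_le_tau rates_pos by simp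
qed (use assms rates_pos components_nonneg tau_pos in auto)

lemma all_pos_if_L_pos:
  assumes "0 \<le> a" "\<And>s. a < s \<Longrightarrow> 0 < L s" "a + ptau1 p + ptau2 p < t"
  shows "0 < L t \<and> 0 < N t \<and> 0 < Aq t \<and> 0 < Af t"
proof -
  have N: "0 < N s" if "a < s" for s
    using assms that by (intro N_pos_after[of a "a + 1"]) auto
  have Aq: "0 < Aq s" if "a < s" for s
    using assms that N by (intro Aq_pos_after[of a "a + 1"]) auto
  have Af: "0 < Af s" if "a + ptau2 p < s" for s
    using assms that Aq params_pos by (intro Af_pos_after[of a "a + 1"]) auto
  have L: "0 < L s" if "a + ptau2 p + ptau1 p < s" for s
    using assms that Af params_pos by (intro L_pos_after[of "a + ptau2 p" "a + ptau2 p + 1"]) auto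
  show ?thesis using assms N Aq Af L params_pos by auto
qed

lemma L_pos_after_Aq_pos:
  assumes "0 \<le> a + ptau2 p" "a < b" "\<And>s. s \<in> {a<..<b} \<Longrightarrow> 0 < Aq s"
  shows "\<exists>a'\<ge>0. \<forall>s>a'. 0 < L s"
proof (intro exI[of _ "a + ptau2 p + ptau1 p"] conjI allI impI)
  have "0 < Af s" if "a + ptau2 p < s" for s
    using assms that by (intro Af_pos_after[of a b]) auto
  then show "0 < L s" if "a + ptau2 p + ptau1 p < s" for s
    using that assms(1) params_pos by (intro L_pos_after[of "a + ptau2 p" "a + ptau2 p + 1"]) auto
qed (use assms params_pos in simp)

lemma L_eventually_pos:
  assumes "effective_nonzero_init p L N Aq Af"
  shows "\<exists>a\<ge>0. \<forall>s>a. 0 < L s"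
proof -
  have pos_near: "\<exists>d>0. \<forall>s\<in>{\<theta>..\<theta> + d}. 0 < x s"
    if "continuous_on {-\<tau>..} x" "- \<tau> \<le> \<theta>" "0 \<le> x \<theta>" "x \<theta> \<noteq> 0" for x :: "real \<Rightarrow> real" and \<theta>
    using that by (intro continuous_on_pos_right_interval) auto
  from assms consider "L 0 \<noteq> 0" | "N 0 \<noteq> 0"
    | \<theta> where "\<theta> \<in> {- ptau2 p..0}" "Aq \<theta> \<noteq> 0" | \<theta> where "\<theta> \<in> {- ptau1 p..0}" "Af \<theta> \<noteq> 0"
    unfolding effective_nonzero_init_def by blast
  then show ?thesis
  proof cases
    case 1
    then obtain d where "d > 0" "\<And>s. s \<in> {0..d} \<Longrightarrow> 0 < L s"
      using pos_near[OF continuous(1), of 0] components_nonneg[of 0] tau_pos by auto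
    then have "0 < N s" if "0 < s" for s
      using that by (intro N_pos_after[of 0 d]) auto
    then have "0 < Aq s" if "0 < s" for s
      using that by (intro Aq_pos_after[of 0 1]) auto
    then show ?thesis using L_pos_after_Aq_pos[of 0 1] params_pos by auto
  next
    case 2
    then obtain d where "d > 0" "\<And>s. s \<in> {0..d} \<Longrightarrow> 0 < N s"
      using pos_near[OF continuous(2), of 0] components_nonneg[of 0] tau_pos by auto
    then have "0 < Aq s" if "0 < s" for s
      using that by (intro Aq_pos_after[of 0 d]) auto
    then show ?thesis using L_pos_after_Aq_pos[of 0 1] params_pos by auto
  next
    case 3
    then obtain d where "d > 0" "\<And>s. s \<in> {\<theta>..\<theta> + d} \<Longrightarrow> 0 < Aq s"
      using pos_near[OF continuous(3), of \<theta>] components_nonneg[of \<theta>] delays_le_tau by auto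
    then show ?thesis using L_pos_after_Aq_pos[of \<theta> "\<theta> + d"] 3 by auto
  next
    case 4
    then obtain d where "d > 0" "\<And>s. s \<in> {\<theta>..\<theta> + d} \<Longrightarrow> 0 < Af s"
      using pos_near[OF continuous(4), of \<theta>] components_nonneg[of \<theta>] delays_le_tau by auto
    then have "0 < L s" if "\<theta> + ptau1 p < s" for s
      using that 4 by (intro L_pos_after[of \<theta> "\<theta> + d"]) auto
    then show ?thesis using 4 by (intro exI[of _ "\<theta> + ptau1 p"]) auto
  qed
qed

lemma eventually_all_pos:
  assumes "effective_nonzero_init p L N Aq Af"
  obtains T where "0 \<le> T" "\<And>t. T \<le> t \<Longrightarrow> 0 < L t \<and> 0 < N t \<and> 0 < Aq t \<and> 0 < Af t"
proof -
  obtain a where "0 \<le> a" "\<And>s. a < s \<Longrightarrow> 0 < L s"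
    using L_eventually_pos[OF assms] by blast
  then show thesis
    using all_pos_if_L_pos params_pos by (intro that[of "a + ptau1 p + ptau2 p + 1"]) auto
qed

text \<open>Persistence: on a window of length \<open>\<tau>\<close> on which the solution is positive, a small
  multiple of the equilibrium is a lower solution below it.\<close>

lemma liminf_L_pos:
  assumes "0 < Lstar" "effective_nonzero_init p L N Aq Af"
  shows "0 < fst liminf_state"
proof -
  obtain T where "0 \<le> T" and pos: "\<And>t. T \<le> t \<Longrightarrow> 0 < L t \<and> 0 < N t \<and> 0 < Aq t \<and> 0 < Af t"
    using eventually_all_pos[OF assms(2)] by blast
  have W: "compact {T..T + \<tau>}" "{T..T + \<tau>} \<subseteq> {-\<tau>..}"
    using \<open>0 \<le> T\<close> tau_pos by auto
  have cont: "continuous_on {T..T + \<tau>} (\<lambda>t. min (min (L t) (N t)) (min (Aq t) (Af t)))"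
    using continuous by (intro continuous_intros continuous_on_subset[OF _ W(2)])
  have "0 < min (min (L t) (N t)) (min (Aq t) (Af t))" if "t \<in> {T..T + \<tau>}" for t
    using pos[of t] that by simp
  then obtain m where "0 < m" and bounds: "\<And>t. t \<in> {T..T + \<tau>} \<Longrightarrow>
      m \<le> min (min (L t) (N t)) (min (Aq t) (Af t))"
    using compact_continuous_pos_lower_bound[OF W(1) cont] by blast
  obtain u1 u2 u3 u4 where u: "eq_curve Lstar = (u1, u2, u3, u4)" by (cases "eq_curve Lstar") auto
  have "0 < u1" "0 < u2" "0 < u3" "0 < u4" using eq_curve_pos[OF assms(1)] by (simp_all add: u)
  define s where "s = min 1 (min (min (m / u1) (m / u2)) (min (m / u3) (m / u4)))"
  have "0 < s" "s \<le> 1" using \<open>0 < m\<close> \<open>0 < u1\<close> \<open>0 < u2\<close> \<open>0 < u3\<close> \<open>0 < u4\<close> by (auto simp: s_def)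
  have "s * u1 \<le> m" "s * u2 \<le> m" "s * u3 \<le> m" "s * u4 \<le> m"
    using \<open>0 < u1\<close> \<open>0 < u2\<close> \<open>0 < u3\<close> \<open>0 < u4\<close>
    by (auto simp: s_def pos_le_divide_eq[symmetric] min_le_iff_disj)
  then have init: "s *\<^sub>R eq_curve Lstar \<le> state t" if "t \<in> {T..T + \<tau>}" for t
    using bounds[OF that] by (simp add: u state_def)
  have lower_sol: "0 \<le> rhs (s *\<^sub>R eq_curve Lstar)"
    using rhs_scale_lower[of "eq_curve Lstar" s] rhs_eq_curve_Lstar[OF assms(1)]
      \<open>0 < s\<close> \<open>s \<le> 1\<close> \<open>0 < u1\<close> by (simp add: u)
  have after: "s *\<^sub>R eq_curve Lstar \<le> state t" if "T \<le> t" for t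
  proof (rule lower_solution_invariant[where T = "T + \<tau>", OF _ lower_sol])
    show "0 \<le> s *\<^sub>R eq_curve Lstar"
      using \<open>0 < s\<close> \<open>0 < u1\<close> \<open>0 < u2\<close> \<open>0 < u3\<close> \<open>0 < u4\<close> by (simp add: u zero_prod_def)
    show "s *\<^sub>R eq_curve Lstar \<le> state t'" if "t' \<in> {T + \<tau> - \<tau>..T + \<tau>}" for t'
      using init that by simp
  qed (use \<open>0 \<le> T\<close> tau_pos \<open>T \<le> t\<close> in auto)
  have "eventually (\<lambda>t. s * u1 \<le> L t) at_top"
    using eventually_ge_at_top[of T] by eventually_elim (use after in \<open>simp add: u state_def\<close>)
  then have "s * u1 \<le> liminf_at_top L"
    by (intro le_liminf_at_top[OF Bfun_components(1)]) (auto elim: eventually_mono)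
  moreover have "0 < s * u1" using \<open>0 < s\<close> \<open>0 < u1\<close> by simp
  ultimately show ?thesis by (simp add: liminf_state_def)
qed

end

section \<open>Stability and attractivity\<close>

definition near :: "real \<Rightarrow> real \<times> real \<times> real \<times> real \<Rightarrow> real \<times> real \<times> real \<times> real \<Rightarrow> bool" where
  "near \<delta> = (\<lambda>(e1, e2, e3, e4) (x1, x2, x3, x4).
     \<bar>x1 - e1\<bar> < \<delta> \<and> \<bar>x2 - e2\<bar> < \<delta> \<and> \<bar>x3 - e3\<bar> < \<delta> \<and> \<bar>x4 - e4\<bar> < \<delta>)"

context model
begin

lemma stable_in_if_trapped:
  assumes trap: "\<And>\<epsilon>. \<epsilon> > 0 \<Longrightarrow> \<exists>\<delta>>0. \<exists>lo hi. 0 \<le> lo \<and> 0 \<le> rhs lo \<and> rhs hi \<le> 0 \<and>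
      (\<forall>x\<ge>0. near \<delta> e x \<longrightarrow> lo \<le> x \<and> x \<le> hi) \<and> (\<forall>x. lo \<le> x \<and> x \<le> hi \<longrightarrow> near \<epsilon> e x)"
  shows "stable_in p e P"
proof -
  obtain e1 e2 e3 e4 where e: "e = (e1, e2, e3, e4)" by (cases e) auto
  show ?thesis
    unfolding stable_in_def e prod.case
  proof (intro allI impI)
    fix \<epsilon> :: real assume "\<epsilon> > 0"
    then obtain \<delta> lo hi where "\<delta> > 0" "0 \<le> lo" "0 \<le> rhs lo" "rhs hi \<le> 0"
      and into: "\<And>x. 0 \<le> x \<Longrightarrow> near \<delta> e x \<Longrightarrow> lo \<le> x \<and> x \<le> hi"
      and out: "\<And>x. lo \<le> x \<Longrightarrow> x \<le> hi \<Longrightarrow> near \<epsilon> e x"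
      using trap[OF \<open>\<epsilon> > 0\<close>] by blast
    show "\<exists>\<delta>>0. \<forall>L N Aq Af. is_solution p L N Aq Af \<and> nonneg_init p L N Aq Af \<and> P L N Aq Af \<and>
        (\<forall>\<theta>\<in>{-\<tau>..0}. \<bar>L \<theta> - e1\<bar> < \<delta> \<and> \<bar>N \<theta> - e2\<bar> < \<delta> \<and> \<bar>Aq \<theta> - e3\<bar> < \<delta> \<and> \<bar>Af \<theta> - e4\<bar> < \<delta>)
        \<longrightarrow> (\<forall>t\<ge>-\<tau>. \<bar>L t - e1\<bar> < \<epsilon> \<and> \<bar>N t - e2\<bar> < \<epsilon> \<and> \<bar>Aq t - e3\<bar> < \<epsilon> \<and> \<bar>Af t - e4\<bar> < \<epsilon>)"
    proof (rule exI[of _ \<delta>], rule conjI[OF \<open>\<delta> > 0\<close>], intro allI impI)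
      fix L N Aq Af t
      assume H: "is_solution p L N Aq Af \<and> nonneg_init p L N Aq Af \<and> P L N Aq Af \<and>
        (\<forall>\<theta>\<in>{-\<tau>..0}. \<bar>L \<theta> - e1\<bar> < \<delta> \<and> \<bar>N \<theta> - e2\<bar> < \<delta> \<and> \<bar>Aq \<theta> - e3\<bar> < \<delta> \<and> \<bar>Af \<theta> - e4\<bar> < \<delta>)"
        and "- \<tau> \<le> t"
      interpret S: nonneg_solution p L N Aq Af
        using H admissible by unfold_locales auto
      have init: "lo \<le> S.state \<theta> \<and> S.state \<theta> \<le> hi" if "\<theta> \<in> {0 - \<tau>..0}" for \<theta>
        using into[OF S.state_nonneg] H that by (simp add: near_def e S.state_def)
      have "lo \<le> S.state t" "S.state t \<le> hi"
        using S.lower_solution_invariant[OF \<open>0 \<le> lo\<close> \<open>0 \<le> rhs lo\<close>, of 0]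
          S.upper_solution_invariant[OF \<open>rhs hi \<le> 0\<close>, of 0] init \<open>- \<tau> \<le> t\<close> by auto
      then have "near \<epsilon> e (S.state t)" by (rule out)
      then show "\<bar>L t - e1\<bar> < \<epsilon> \<and> \<bar>N t - e2\<bar> < \<epsilon> \<and> \<bar>Aq t - e3\<bar> < \<epsilon> \<and> \<bar>Af t - e4\<bar> < \<epsilon>"
        by (simp add: near_def e S.state_def)
    qed
  qed
qed

lemma stable_zero:
  assumes "R0 p \<le> 1"
  shows "stable_in p (0, 0, 0, 0) P"
proof (rule stable_in_if_trapped)
  fix \<epsilon> :: real assume "\<epsilon> > 0"
  obtain v2 v3 v4 where v: "lin_vec = (1, v2, v3, v4)" by (simp add: lin_vec_def)
  have "0 < v2" "0 < v3" "0 < v4" using lin_vec_pos by (simp_all add: v)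
  define vmax where "vmax = max (max 1 v2) (max v3 v4)"
  define vmin where "vmin = min (min 1 v2) (min v3 v4)"
  define \<sigma> where "\<sigma> = \<epsilon> / (2 * vmax)"
  have "0 < vmin" "0 < \<sigma>" "\<sigma> * vmax < \<epsilon>"
    using \<open>0 < v2\<close> \<open>0 < v3\<close> \<open>0 < v4\<close> \<open>\<epsilon> > 0\<close> by (auto simp: vmin_def vmax_def \<sigma>_def)
  have hi: "rhs (\<sigma>, \<sigma> * v2, \<sigma> * v3, \<sigma> * v4) \<le> 0"
    using rhs_scaled_lin_vec_nonpos[OF assms, of \<sigma>] \<open>0 < \<sigma>\<close> by (simp add: v)
  show "\<exists>\<delta>>0. \<exists>lo hi. 0 \<le> lo \<and> 0 \<le> rhs lo \<and> rhs hi \<le> 0 \<and>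
      (\<forall>x\<ge>0. near \<delta> (0, 0, 0, 0) x \<longrightarrow> lo \<le> x \<and> x \<le> hi) \<and>
      (\<forall>x. lo \<le> x \<and> x \<le> hi \<longrightarrow> near \<epsilon> (0, 0, 0, 0) x)"
  proof (rule exI[of _ "\<sigma> * vmin"], rule conjI[OF mult_pos_pos[OF \<open>0 < \<sigma>\<close> \<open>0 < vmin\<close>]],
      rule exI[of _ 0], rule exI[of _ "(\<sigma>, \<sigma> * v2, \<sigma> * v3, \<sigma> * v4)"], intro conjI)
    have "\<sigma> * vmin \<le> \<sigma>" "\<sigma> * vmin \<le> \<sigma> * v2" "\<sigma> * vmin \<le> \<sigma> * v3" "\<sigma> * vmin \<le> \<sigma> * v4"
      using \<open>0 < \<sigma>\<close> by (simp_all add: vmin_def)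
    then show "\<forall>x\<ge>0. near (\<sigma> * vmin) (0, 0, 0, 0) x \<longrightarrow> 0 \<le> x \<and> x \<le> (\<sigma>, \<sigma> * v2, \<sigma> * v3, \<sigma> * v4)"
      by (auto simp: near_def)
    have "\<sigma> \<le> \<sigma> * vmax" "\<sigma> * v2 \<le> \<sigma> * vmax" "\<sigma> * v3 \<le> \<sigma> * vmax" "\<sigma> * v4 \<le> \<sigma> * vmax"
      using \<open>0 < \<sigma>\<close> by (simp_all add: vmax_def)
    then show "\<forall>x. 0 \<le> x \<and> x \<le> (\<sigma>, \<sigma> * v2, \<sigma> * v3, \<sigma> * v4) \<longrightarrow> near \<epsilon> (0, 0, 0, 0) x"
      using \<open>\<sigma> * vmax < \<epsilon>\<close> by (auto simp: near_def zero_prod_def)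
  qed (simp_all add: rhs_zero hi)
qed

lemma stable_positive_equilibrium:
  assumes "0 < Lstar"
  shows "stable_in p (eq_curve Lstar) P"
proof (rule stable_in_if_trapped)
  fix \<epsilon> :: real assume "\<epsilon> > 0"
  obtain u1 u2 u3 u4 where u: "eq_curve Lstar = (u1, u2, u3, u4)" by (cases "eq_curve Lstar") auto
  have "0 < u1" "0 < u2" "0 < u3" "0 < u4" using eq_curve_pos[OF assms] by (simp_all add: u)
  define umax where "umax = max (max u1 u2) (max u3 u4)"
  define umin where "umin = min (min u1 u2) (min u3 u4)"
  define s where "s = min (1 / 2) (\<epsilon> / (2 * umax))"
  have "0 < umin" "0 < umax" using \<open>0 < u1\<close> \<open>0 < u2\<close> \<open>0 < u3\<close> \<open>0 < u4\<close>
    by (auto simp: umin_def umax_def)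
  have "0 < s" "s \<le> 1" using \<open>\<epsilon> > 0\<close> \<open>0 < umax\<close> by (auto simp: s_def)
  have "s * umax \<le> \<epsilon> / (2 * umax) * umax" using \<open>0 < umax\<close> by (intro mult_right_mono) (auto simp: s_def)
  then have "s * umax < \<epsilon>" using \<open>0 < umax\<close> \<open>\<epsilon> > 0\<close> by simp
  have rhs_u: "rhs (u1, u2, u3, u4) = 0" using rhs_eq_curve_Lstar[OF assms] by (simp add: u)
  have lo: "0 \<le> rhs ((1 - s) *\<^sub>R (u1, u2, u3, u4))"
    using rhs_scale_lower[of "(u1, u2, u3, u4)" "1 - s"] rhs_u \<open>0 < s\<close> \<open>s \<le> 1\<close> \<open>0 < u1\<close> by simp
  have hi: "rhs ((1 + s) *\<^sub>R (u1, u2, u3, u4)) \<le> 0"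
    using rhs_scale_upper[of "(u1, u2, u3, u4)" "1 + s"] rhs_u \<open>0 < s\<close> \<open>0 < u1\<close> by simp
  show "\<exists>\<delta>>0. \<exists>lo hi. 0 \<le> lo \<and> 0 \<le> rhs lo \<and> rhs hi \<le> 0 \<and>
      (\<forall>x\<ge>0. near \<delta> (eq_curve Lstar) x \<longrightarrow> lo \<le> x \<and> x \<le> hi) \<and>
      (\<forall>x. lo \<le> x \<and> x \<le> hi \<longrightarrow> near \<epsilon> (eq_curve Lstar) x)"
  proof (rule exI[of _ "s * umin"], rule conjI[OF mult_pos_pos[OF \<open>0 < s\<close> \<open>0 < umin\<close>]],
      rule exI[of _ "(1 - s) *\<^sub>R (u1, u2, u3, u4)"], rule exI[of _ "(1 + s) *\<^sub>R (u1, u2, u3, u4)"],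
      intro conjI lo hi)
    show "0 \<le> (1 - s) *\<^sub>R (u1, u2, u3, u4)"
      using \<open>s \<le> 1\<close> \<open>0 < u1\<close> \<open>0 < u2\<close> \<open>0 < u3\<close> \<open>0 < u4\<close> by (simp add: zero_prod_def)
    have "umin \<le> u1" "umin \<le> u2" "umin \<le> u3" "umin \<le> u4" by (auto simp: umin_def)
    then show "\<forall>x\<ge>0. near (s * umin) (eq_curve Lstar) x \<longrightarrow>
        (1 - s) *\<^sub>R (u1, u2, u3, u4) \<le> x \<and> x \<le> (1 + s) *\<^sub>R (u1, u2, u3, u4)"
      using \<open>0 < s\<close> abs_diff_lt_imp_scaled_bounds[of _ _ s umin]
      by (auto simp: near_def u)
    have "u1 \<le> umax" "u2 \<le> umax" "u3 \<le> umax" "u4 \<le> umax" by (auto simp: umax_def)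
    then show "\<forall>x. (1 - s) *\<^sub>R (u1, u2, u3, u4) \<le> x \<and> x \<le> (1 + s) *\<^sub>R (u1, u2, u3, u4) \<longrightarrow>
        near \<epsilon> (eq_curve Lstar) x"
      using \<open>0 < s\<close> \<open>s * umax < \<epsilon>\<close> scaled_bounds_imp_abs_diff_lt[of s _ _ umax \<epsilon>]
      by (auto simp: near_def u)
  qed
qed

lemma attractive_zero:
  assumes "R0 p \<le> 1"
  shows "attractive_in p (0, 0, 0, 0) P"
  unfolding attractive_in_def prod.case
proof (intro allI impI)
  fix L N Aq Af assume "is_solution p L N Aq Af \<and> nonneg_init p L N Aq Af \<and> P L N Aq Af"
  then interpret S: nonneg_solution p L N Aq Af
    using admissible by unfold_locales auto
  have "max 0 Lstar = 0" using assms R0_gt_1_iff by simp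
  then have "S.limsup_state \<le> (0, 0, 0, 0)" "(0, 0, 0, 0) \<le> S.liminf_state"
    using lower_solution_le_eq_curve_Lstar[OF S.limsup_state_nonneg S.rhs_limsup_state_nonneg]
      S.liminf_state_nonneg
    by (simp_all add: eq_curve_zero zero_prod_def)
  then show "(L \<longlongrightarrow> 0) at_top \<and> (N \<longlongrightarrow> 0) at_top \<and> (Aq \<longlongrightarrow> 0) at_top \<and> (Af \<longlongrightarrow> 0) at_top"
    by (rule S.tendsto_if_limits_bracket)
qed

lemma attractive_positive_equilibrium:
  assumes "0 < Lstar"
  shows "attractive_in p (eq_curve Lstar) (effective_nonzero_init p)"
proof -
  obtain u1 u2 u3 u4 where u: "eq_curve Lstar = (u1, u2, u3, u4)" by (cases "eq_curve Lstar") auto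
  show ?thesis
    unfolding attractive_in_def u prod.case
  proof (intro allI impI)
    fix L N Aq Af
    assume H: "is_solution p L N Aq Af \<and> nonneg_init p L N Aq Af \<and> effective_nonzero_init p L N Aq Af"
    then interpret S: nonneg_solution p L N Aq Af
      using admissible by unfold_locales auto
    have "S.limsup_state \<le> (u1, u2, u3, u4)" "(u1, u2, u3, u4) \<le> S.liminf_state"
      using lower_solution_le_eq_curve_Lstar[OF S.limsup_state_nonneg S.rhs_limsup_state_nonneg]
        eq_curve_Lstar_le_upper_solution[OF _ S.liminf_L_pos S.rhs_liminf_state_nonpos] assms H
      by (simp_all add: u max_def)
    then show "(L \<longlongrightarrow> u1) at_top \<and> (N \<longlongrightarrow> u2) at_top \<and> (Aq \<longlongrightarrow> u3) at_top \<and> (Af \<longlongrightarrow> u4) at_top"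
      by (rule S.tendsto_if_limits_bracket)
  qed
qed

end

theorem theorem4p1:
  fixes p :: par
  assumes "admissible p"
  shows "(R0 p \<le> 1 \<longrightarrow>
            stable_in p (0, 0, 0, 0) (\<lambda>L N Aq Af. True) \<and>
            attractive_in p (0, 0, 0, 0) (\<lambda>L N Aq Af. True))
       \<and> (R0 p > 1 \<longrightarrow>
            (\<exists>e. is_equilibrium p e \<and> fst e > 0 \<and> fst (snd e) > 0 \<and>
                 fst (snd (snd e)) > 0 \<and> snd (snd (snd e)) > 0 \<and>
                 (\<forall>e'. is_equilibrium p e' \<and> fst e' > 0 \<and> fst (snd e') > 0 \<and>
                       fst (snd (snd e')) > 0 \<and> snd (snd (snd e')) > 0 \<longrightarrow> e' = e) \<and>
                 stable_in p e (nonzero_init p) \<and>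
                 attractive_in p e (effective_nonzero_init p)))"
proof -
  interpret model p by unfold_locales (rule assms)
  have "is_equilibrium p (eq_curve Lstar)" if "0 < Lstar"
    using rhs_eq_curve_Lstar[OF that] by (simp add: is_equilibrium_iff_rhs)
  moreover have "\<forall>e'. is_equilibrium p e' \<and> fst e' > 0 \<and> fst (snd e') > 0 \<and>
      fst (snd (snd e')) > 0 \<and> snd (snd (snd e')) > 0 \<longrightarrow> e' = eq_curve Lstar"
    using positive_equilibrium_unique by blast
  ultimately show ?thesis
    using stable_zero attractive_zero R0_gt_1_iff eq_curve_pos
      stable_positive_equilibrium attractive_positive_equilibrium
    by blast
qed

end
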